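(* Let $H$ be a distribution function on $\mathbb{R}^p$ and $\dot\mu_\theta:\mathbb{R}^p\to\mathbb{R}^q$ with coordinates in $L_2(\mathbb{R}^p,H)$ and $C_\theta=\int\dot\mu_\theta\dot\mu_\theta^TdH$ positive definite. Let $\{A_z:z\in\mathbb{R}\}$ be a scanning family, and assume $\mathcal{C}_z=\int_{A_z^c}\dot\mu_\theta\dot\mu_\theta^TdH$ is nonsingular for all $-\infty<z<\infty$. Let $\mathcal{G}=\{\gamma\in L_2(\mathbb{R}^p,H):\int\gamma\dot\mu_\theta\,dH=0\}$. Then the transformation $\mathcal{K}$ is a norm-preserving transformation from $L_2(\mathbb{R}^p,H)$ into $\mathcal{G}$: $\mathcal{K}\gamma\perp\dot\mu_\theta$ and $\int(\mathcal{K}\gamma)^2dH=\int\gamma^2dH$. Consequently, for any fixed $\varphi\in L_2(\mathbb{R},F)$, the process $w(\gamma,\varphi)=\tilde\xi(\mathcal{K}\gamma,\varphi)$ is a function-parametric Brownian motion in $\gamma\in L_2(\mathbb{R}^p,H)$, i.e., a zero-mean Gaussian process with covariance $Ew(\gamma_1,\varphi)w(\gamma_2,\varphi)=\int\gamma_1\gamma_2dH\int\varphi^2dF$.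
   Context: A scanning family is a family of measurable sets $A_z\subset\mathbb{R}^p$, $z\in\mathbb{R}$, with $A_z\subseteq A_{z'}$ for $z\le z'$, $H(A_{-\infty})=0$, $H(A_\infty)=1$, and $z\mapsto H(A_z)$ strictly increasing and absolutely continuous. $B^c$ is the complement of $B$, $z(x)=\inf\{z:A_z\ni x\}$, $\mathcal{T}\gamma(x)=\int_{A_{z(x)}}\gamma(y)\dot\mu_\theta^T(y)\mathcal{C}_{z(y)}^{-1}dH(y)\,\dot\mu_\theta(x)$, and $\mathcal{K}\gamma=\gamma-\mathcal{T}\gamma$. $F$ is a distribution function on $\mathbb{R}$. $b$ is the zero-mean Gaussian process indexed by pairs $(\gamma,\varphi)\in L_2(\mathbb{R}^p,H)\times L_2(\mathbb{R},F)$, bilinear, with $Eb(\gamma_1,\varphi_1)b(\gamma_2,\varphi_2)=\int\gamma_1\gamma_2dH\int\varphi_1\varphi_2dF$. $\tilde\xi(\gamma,\varphi)=b(\gamma_\perp,\varphi)$ where $\gamma_\perp=\gamma-\int\gamma\dot\mu_\theta^TdH\,C_\theta^{-1}\dot\mu_\theta$. *)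

theory Defs
  imports "HOL-Analysis.Analysis" "HOL-Probability.Probability"
begin

definition L2 :: "'a measure \<Rightarrow> ('a \<Rightarrow> real) \<Rightarrow> bool" where
  "L2 M g \<longleftrightarrow> g \<in> borel_measurable M \<and> integrable M (\<lambda>x. (g x)\<^sup>2)"

definition abs_continuous_real :: "(real \<Rightarrow> real) \<Rightarrow> bool" where
  "abs_continuous_real f \<longleftrightarrow>
     (\<forall>\<epsilon>>0. \<exists>\<delta>>0. \<forall>(n::nat) (a::nat \<Rightarrow> real) b.
        (\<forall>i<n. a i \<le> b i) \<and>
        (\<forall>i<n. \<forall>j<n. i \<noteq> j \<longrightarrow> b i \<le> a j \<or> b j \<le> a i) \<and>
        (\<Sum>i<n. b i - a i) < \<delta>
        \<longrightarrow> (\<Sum>i<n. \<bar>f (b i) - f (a i)\<bar>) < \<epsilon>)"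

text \<open>A_{-infinity} and A_{infinity} are read as the intersection and the union of the family.\<close>

definition scanning_family :: "'a measure \<Rightarrow> (real \<Rightarrow> 'a set) \<Rightarrow> bool" where
  "scanning_family H A \<longleftrightarrow>
     (\<forall>z. A z \<in> sets H) \<and>
     (\<forall>z z'. z \<le> z' \<longrightarrow> A z \<subseteq> A z') \<and>
     measure H (\<Inter>z. A z) = 0 \<and>
     measure H (\<Union>z. A z) = 1 \<and>
     strict_mono (\<lambda>z. measure H (A z)) \<and>
     abs_continuous_real (\<lambda>z. measure H (A z))"

definition Aext :: "(real \<Rightarrow> 'a set) \<Rightarrow> ereal \<Rightarrow> 'a set" where
  "Aext A e = (if e = \<infinity> then (\<Union>z. A z) else if e = -\<infinity> then (\<Inter>z. A z)
               else A (real_of_ereal e))"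

definition zx :: "(real \<Rightarrow> 'a set) \<Rightarrow> 'a \<Rightarrow> ereal" where
  "zx A x = Inf {ereal z | z. x \<in> A z}"

definition Ctheta :: "('a::euclidean_space) measure \<Rightarrow> ('a \<Rightarrow> real^'q) \<Rightarrow> real^'q^'q" where
  "Ctheta H mu = (\<chi> i j. LINT y|H. mu y $ i * mu y $ j)"

definition Cz :: "('a::euclidean_space) measure \<Rightarrow> ('a \<Rightarrow> real^'q) \<Rightarrow> (real \<Rightarrow> 'a set)
                   \<Rightarrow> ereal \<Rightarrow> real^'q^'q" where
  "Cz H mu A e = (\<chi> i j. LINT y:(- Aext A e)|H. mu y $ i * mu y $ j)"

definition pos_def_matrix :: "real^'q^'q \<Rightarrow> bool" where
  "pos_def_matrix C \<longleftrightarrow> (\<forall>v. v \<noteq> 0 \<longrightarrow> v \<bullet> (C *v v) > 0)"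

definition Top :: "('a::euclidean_space) measure \<Rightarrow> ('a \<Rightarrow> real^'q) \<Rightarrow> (real \<Rightarrow> 'a set)
                    \<Rightarrow> ('a \<Rightarrow> real) \<Rightarrow> 'a \<Rightarrow> real" where
  "Top H mu A g x =
     (LINT y:Aext A (zx A x)|H. g y *\<^sub>R (mu y v* matrix_inv (Cz H mu A (zx A y)))) \<bullet> mu x"

definition Kop :: "('a::euclidean_space) measure \<Rightarrow> ('a \<Rightarrow> real^'q) \<Rightarrow> (real \<Rightarrow> 'a set)
                    \<Rightarrow> ('a \<Rightarrow> real) \<Rightarrow> 'a \<Rightarrow> real" where
  "Kop H mu A g x = g x - Top H mu A g x"

definition gperp :: "('a::euclidean_space) measure \<Rightarrow> ('a \<Rightarrow> real^'q) \<Rightarrow> ('a \<Rightarrow> real) \<Rightarrow> 'a \<Rightarrow> real" where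
  "gperp H mu g x = g x - ((LINT y|H. g y *\<^sub>R mu y) v* matrix_inv (Ctheta H mu)) \<bullet> mu x"

definition centered_gaussian_rv :: "'w measure \<Rightarrow> ('w \<Rightarrow> real) \<Rightarrow> bool" where
  "centered_gaussian_rv M X \<longleftrightarrow> X \<in> borel_measurable M \<and>
     ((AE w in M. X w = 0) \<or> (\<exists>\<sigma>>0. distributed M lborel X (normal_density 0 \<sigma>)))"

definition centered_gaussian_process :: "'w measure \<Rightarrow> 't set \<Rightarrow> ('t \<Rightarrow> 'w \<Rightarrow> real) \<Rightarrow> bool" where
  "centered_gaussian_process M T X \<longleftrightarrow>
     (\<forall>S c. finite S \<longrightarrow> S \<subseteq> T \<longrightarrow> centered_gaussian_rv M (\<lambda>w. \<Sum>t\<in>S. c t * X t w))"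

end

theory Submission
  imports Defs
begin

(* Write a(c) = \<integral>_{z < c} \<gamma> C_z^{-1} \<mu> dH, so that T\<gamma>(x) = a(z(x))^T \<mu>(x), and truncate at the
   sublevel set R_s = {z \<le> s}.  Writing (T\<gamma>)^2 as a double integral and integrating out the
   point with the largest z turns \<mu>\<mu>^T into an increment C_z - C_s of the scanning matrices,
   and C_z cancels the inverse inside a.  This gives the exact identities
     \<integral>_{R_s} (K\<gamma>)^2 dH = \<integral>_{R_s} \<gamma>^2 dH - a_s^T C_s a_s   and   \<integral>_{R_s} K\<gamma> \<mu> dH = C_s a_s,
   with a_s = \<integral>_{R_s} \<gamma> C_z^{-1} \<mu> dH.  Splitting \<gamma> at a fixed level s0 bounds a_s^T C_s a_s
   by a term vanishing with C_s and the tail \<integral>_{z > s0} \<gamma>^2 dH, so the remainder tends to 0.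
   Monotone convergence then yields the isometry, Cauchy-Schwarz for C_s yields K\<gamma> \<perp> \<mu>,
   and polarization yields preservation of inner products.  Since K\<gamma> \<perp> \<mu>, the projection
   \<gamma> \<mapsto> \<gamma>_\<perp> fixes K\<gamma>, so w(\<gamma>, \<phi>) = b(K\<gamma>, \<phi>) is b reindexed along \<gamma> \<mapsto> (K\<gamma>, \<phi>). *)

section \<open>Integration and square-integrable functions\<close>

lemma borel_measurable_vec_iff:
  "(f :: 'a \<Rightarrow> real^'n) \<in> borel_measurable M \<longleftrightarrow> (\<forall>i. (\<lambda>x. f x $ i) \<in> borel_measurable M)"
  unfolding borel_measurable_euclidean_space[where f = f]
  by (auto simp: Basis_vec_def inner_axis)

lemma borel_measurable_det:
  fixes M :: "'a \<Rightarrow> real^'n^'n"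
  assumes "\<And>i j. (\<lambda>y. M y $ i $ j) \<in> borel_measurable N"
  shows "(\<lambda>y. det (M y)) \<in> borel_measurable N"
  unfolding det_def using assms by measurable

lemma integrable_dominated:
  fixes f :: "'a \<Rightarrow> 'b::{banach,second_countable_topology}"
  assumes "integrable M u" "f \<in> borel_measurable M" "\<And>x. norm (f x) \<le> u x"
  shows "integrable M f"
  using assms
  by (intro Bochner_Integration.integrable_bound[of M u f]) (auto intro: order_trans[OF _ abs_ge_self])

lemma (in pair_sigma_finite) Fubini_integral_product_bound:
  fixes F :: "'a \<Rightarrow> 'b \<Rightarrow> real"
  assumes F: "(\<lambda>(x, y). F x y) \<in> borel_measurable (M1 \<Otimes>\<^sub>M M2)"
    and u: "integrable M1 u" and v: "integrable M2 v"
    and bound: "\<And>x y. \<bar>F x y\<bar> \<le> u x * v y"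
  shows "(\<integral>x. \<integral>y. F x y \<partial>M2 \<partial>M1) = (\<integral>y. \<integral>x. F x y \<partial>M1 \<partial>M2)"
proof -
  have [measurable]: "u \<in> borel_measurable M1" "v \<in> borel_measurable M2"
    using u v by auto
  have "integrable (M1 \<Otimes>\<^sub>M M2) (\<lambda>(x, y). u x * v y)"
  proof (rule Fubini_integrable)
    have "integrable M1 (\<lambda>x. \<bar>u x\<bar> * (\<integral>y. \<bar>v y\<bar> \<partial>M2))" using u by auto
    then show "integrable M1 (\<lambda>x. \<integral>y. norm (case (x, y) of (x, y) \<Rightarrow> u x * v y) \<partial>M2)"
      by (simp add: abs_mult)
  qed (use v in auto)
  then have "integrable (M1 \<Otimes>\<^sub>M M2) (\<lambda>(x, y). F x y)"
    by (rule Bochner_Integration.integrable_bound[OF _ F])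
      (auto intro: order_trans[OF bound abs_ge_self])
  then show ?thesis using Fubini_integral[of F] by simp
qed

lemma L2_measurable: "L2 M f \<Longrightarrow> f \<in> borel_measurable M"
  unfolding L2_def by simp

lemma L2_integrable_mult:
  assumes "L2 M f" "L2 M g"
  shows "integrable M (\<lambda>x. f x * g x)"
proof (rule Bochner_Integration.integrable_bound)
  show "integrable M (\<lambda>x. (f x)\<^sup>2 + (g x)\<^sup>2)"
    using assms unfolding L2_def by auto
  have "\<bar>f x\<bar> * \<bar>g x\<bar> \<le> (f x)\<^sup>2 + (g x)\<^sup>2" for x
  proof -
    have "2 * (\<bar>f x\<bar> * \<bar>g x\<bar>) \<le> (f x)\<^sup>2 + (g x)\<^sup>2"
      using sum_squares_bound[of "\<bar>f x\<bar>" "\<bar>g x\<bar>"] by (simp add: power2_eq_square mult.assoc)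
    moreover have "0 \<le> \<bar>f x\<bar> * \<bar>g x\<bar>" by simp
    ultimately show ?thesis by linarith
  qed
  then show "AE x in M. norm (f x * g x) \<le> norm ((f x)\<^sup>2 + (g x)\<^sup>2)"
    by (intro AE_I2) (simp add: abs_mult)
qed (use assms in \<open>auto simp: L2_def\<close>)

lemma L2_add: "L2 M f \<Longrightarrow> L2 M g \<Longrightarrow> L2 M (\<lambda>x. f x + g x)"
  using L2_integrable_mult[of M f g]
  unfolding L2_def by (auto simp: power2_sum mult.assoc)

lemma L2_cmult: "L2 M f \<Longrightarrow> L2 M (\<lambda>x. c * f x)"
  unfolding L2_def by (auto simp: power_mult_distrib)

lemma L2_abs: "L2 M f \<Longrightarrow> L2 M (\<lambda>x. \<bar>f x\<bar>)"
  unfolding L2_def by auto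

lemma L2_sum: "finite I \<Longrightarrow> (\<And>i. i \<in> I \<Longrightarrow> L2 M (f i)) \<Longrightarrow> L2 M (\<lambda>x. \<Sum>i\<in>I. f i x)"
proof (induction I rule: finite_induct)
  case empty
  then show ?case by (simp add: L2_def)
next
  case (insert i I)
  then show ?case by (simp add: L2_add)
qed

lemma L2_indicator_mult:
  assumes "S \<in> sets M" "L2 M f"
  shows "L2 M (\<lambda>x. indicator S x * f x)"
proof -
  have "(indicator S x * f x)\<^sup>2 = (f x)\<^sup>2 * indicator S x" for x
    by (simp add: indicator_def)
  then show ?thesis
    using assms integrable_real_mult_indicator[of S M "\<lambda>x. (f x)\<^sup>2"] by (auto simp: L2_def)
qed

lemma L2_integrable_indicator_mult:
  assumes "S \<in> sets M" "L2 M f" "L2 M h"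
  shows "integrable M (\<lambda>x. indicator S x * (f x * h x))"
  using integrable_mult_indicator[OF assms(1) L2_integrable_mult[OF assms(2,3)]] by simp

lemma L2_inner:
  fixes f :: "'a \<Rightarrow> real^'n"
  assumes "\<And>i. L2 M (\<lambda>x. f x $ i)"
  shows "L2 M (\<lambda>x. v \<bullet> f x)"
  using L2_sum[of UNIV M "\<lambda>i x. v $ i * f x $ i"] assms
  by (simp add: L2_cmult inner_vec_def)

lemma L2_norm:
  fixes f :: "'a \<Rightarrow> real^'n"
  assumes "\<And>i. L2 M (\<lambda>x. f x $ i)"
  shows "L2 M (\<lambda>x. norm (f x))"
proof -
  have "integrable M (\<lambda>x. \<Sum>i\<in>UNIV. f x $ i * f x $ i)"
    using L2_integrable_mult[OF assms assms] by auto
  moreover have "f \<in> borel_measurable M"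
    using assms by (auto simp: L2_def borel_measurable_vec_iff)
  ultimately show ?thesis
    unfolding L2_def by (simp add: power2_norm_eq_inner inner_vec_def)
qed

section \<open>Positive semidefinite matrices\<close>

definition psd_matrix :: "real^'n^'n \<Rightarrow> bool" where
  "psd_matrix M \<longleftrightarrow> transpose M = M \<and> (\<forall>x. 0 \<le> x \<bullet> (M *v x))"

lemma symmetric_matrix_inner_commute:
  fixes M :: "real^'n^'n"
  assumes "transpose M = M"
  shows "u \<bullet> (M *v v) = v \<bullet> (M *v u)"
  by (metis assms dot_lmul_matrix inner_commute transpose_matrix_vector)

lemma psd_matrix_inner_commute: "psd_matrix M \<Longrightarrow> u \<bullet> (M *v v) = v \<bullet> (M *v u)"
  unfolding psd_matrix_def by (blast intro: symmetric_matrix_inner_commute)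

lemma psd_matrix_nonneg: "psd_matrix M \<Longrightarrow> 0 \<le> x \<bullet> (M *v x)"
  unfolding psd_matrix_def by blast

lemma quadratic_form_add_scaled:
  fixes M :: "real^'n^'n"
  assumes "transpose M = M"
  shows "(u + t *\<^sub>R v) \<bullet> (M *v (u + t *\<^sub>R v)) =
     u \<bullet> (M *v u) + 2 * t * (u \<bullet> (M *v v)) + t\<^sup>2 * (v \<bullet> (M *v v))"
  using symmetric_matrix_inner_commute[OF assms, of v u]
  by (simp add: power2_eq_square algebra_simps)

lemma psd_matrix_Cauchy_Schwarz:
  assumes "psd_matrix M"
  shows "(u \<bullet> (M *v v))\<^sup>2 \<le> (u \<bullet> (M *v u)) * (v \<bullet> (M *v v))"
proof -
  define a b c where "a = u \<bullet> (M *v u)" and "b = u \<bullet> (M *v v)" and "c = v \<bullet> (M *v v)"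
  have q: "0 \<le> a + 2 * t * b + t\<^sup>2 * c" for t
    using assms quadratic_form_add_scaled[of M u t v]
    unfolding psd_matrix_def a_def b_def c_def by metis
  have "0 \<le> c" using assms by (simp add: c_def psd_matrix_nonneg)
  show ?thesis
  proof (cases "c = 0")
    case True
    have "b = 0"
    proof (rule ccontr)
      assume "b \<noteq> 0"
      have "0 \<le> a + 2 * (- (a + 1) / (2 * b)) * b" using q[of "- (a + 1) / (2 * b)"] True by simp
      also have "\<dots> = -1" using \<open>b \<noteq> 0\<close> by (simp add: field_simps)
      finally show False by simp
    qed
    then show ?thesis using True by (simp add: b_def c_def)
  next
    case False
    with \<open>0 \<le> c\<close> have "c > 0" by simp
    have "0 \<le> a + 2 * (- b / c) * b + (- b / c)\<^sup>2 * c" using q[of "- b / c"] .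
    also have "\<dots> = a - b\<^sup>2 / c" using \<open>c > 0\<close> by (simp add: field_simps power2_eq_square)
    finally have "b\<^sup>2 \<le> a * c" using \<open>c > 0\<close> by (simp add: field_simps)
    then show ?thesis by (simp add: a_def b_def c_def)
  qed
qed

lemma psd_matrix_quadratic_form_eq_0:
  assumes "psd_matrix M" "v \<bullet> (M *v v) = 0"
  shows "M *v v = 0"
proof -
  have "((M *v v) \<bullet> (M *v v))\<^sup>2 \<le> ((M *v v) \<bullet> (M *v (M *v v))) * (v \<bullet> (M *v v))"
    by (rule psd_matrix_Cauchy_Schwarz[OF assms(1)])
  then show ?thesis using assms(2) by simp
qed

lemma psd_matrix_quadratic_form_add_le:
  assumes "psd_matrix M"
  shows "(u + v) \<bullet> (M *v (u + v)) \<le> 2 * (u \<bullet> (M *v u)) + 2 * (v \<bullet> (M *v v))"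
  using quadratic_form_add_scaled[of M u 1 v] quadratic_form_add_scaled[of M u "-1" v]
    psd_matrix_nonneg[OF assms, of "u + (-1) *\<^sub>R v"] assms
  unfolding psd_matrix_def by simp

lemma psd_matrix_component_square_le:
  assumes "psd_matrix M"
  shows "((M *v a) $ i)\<^sup>2 \<le> (axis i 1 \<bullet> (M *v axis i 1)) * (a \<bullet> (M *v a))"
  using psd_matrix_Cauchy_Schwarz[OF assms, of "axis i 1" a]
  by (simp add: inner_commute[of "axis i 1"] inner_axis)

lemma psd_matrix_invertible_coercive:
  fixes M :: "real^'n^'n"
  assumes "psd_matrix M" "invertible M"
  obtains l where "l > 0" "\<And>v. l * (norm v)\<^sup>2 \<le> v \<bullet> (M *v v)"
proof -
  let ?Q = "\<lambda>v. v \<bullet> (M *v v)"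
  have cont: "continuous_on (sphere 0 1) ?Q"
    by (intro continuous_intros linear_continuous_on matrix_vector_mul_bounded_linear)
  have "sphere (0::real^'n) 1 \<noteq> {}"
    using vector_choose_size[of 1] by (auto simp: sphere_def)
  then obtain v0 where v0: "v0 \<in> sphere 0 1" "\<And>v. v \<in> sphere 0 1 \<Longrightarrow> ?Q v0 \<le> ?Q v"
    using continuous_attains_inf[OF compact_sphere _ cont] by blast
  have "?Q v0 \<noteq> 0"
  proof
    assume "?Q v0 = 0"
    then have "M *v v0 = 0" by (rule psd_matrix_quadratic_form_eq_0[OF assms(1)])
    then have "v0 = 0"
      using assms(2) unfolding invertible_left_inverse matrix_left_invertible_ker by blast
    then show False using v0(1) by simp
  qed
  with psd_matrix_nonneg[OF assms(1)] have pos: "0 < ?Q v0"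
    by (simp add: order_less_le)
  have "?Q v0 * (norm v)\<^sup>2 \<le> ?Q v" for v
  proof (cases "v = 0")
    case False
    then have "?Q v0 \<le> ?Q ((1 / norm v) *\<^sub>R v)" by (intro v0(2)) simp
    also have "\<dots> = ?Q v / (norm v)\<^sup>2" by (simp add: matrix_vector_mult_scaleR power2_eq_square)
    finally show ?thesis using False by (simp add: field_simps)
  qed simp
  with pos show ?thesis using that by blast
qed

lemma pos_def_matrix_invertible:
  assumes "pos_def_matrix M"
  shows "invertible M"
  unfolding invertible_left_inverse matrix_left_invertible_ker
proof (intro allI impI)
  fix x assume "M *v x = 0"
  then show "x = 0"
    using assms unfolding pos_def_matrix_def by (metis inner_zero_right less_irrefl)
qed

lemma invertible_matrix_inv:
  assumes "invertible M"
  shows "M ** matrix_inv M = mat 1" "matrix_inv M ** M = mat 1"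
  using someI_ex[OF assms[unfolded invertible_def]] unfolding matrix_inv_def by auto

lemma tendsto_quadratic_form:
  fixes M :: "nat \<Rightarrow> real^'n^'n"
  assumes "\<And>i j. (\<lambda>n. M n $ i $ j) \<longlonglongrightarrow> 0"
  shows "(\<lambda>n. u \<bullet> (M n *v u)) \<longlonglongrightarrow> 0"
proof -
  have "(\<lambda>n. \<Sum>i\<in>UNIV. \<Sum>j\<in>UNIV. u $ i * M n $ i $ j * u $ j) \<longlonglongrightarrow> (\<Sum>i\<in>UNIV. \<Sum>j\<in>UNIV. u $ i * 0 * u $ j)"
    by (intro tendsto_sum tendsto_mult tendsto_const assms)
  then show ?thesis
    by (simp add: inner_vec_def matrix_vector_mult_def sum_distrib_left mult_ac)
qed

lemma centered_gaussian_process_reindex: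
  assumes X: "centered_gaussian_process M T X" and h: "h ` S \<subseteq> T"
    and Y: "\<And>s. s \<in> S \<Longrightarrow> Y s = X (h s)"
  shows "centered_gaussian_process M S Y"
  unfolding centered_gaussian_process_def
proof (intro allI impI)
  fix S' and c :: "_ \<Rightarrow> real"
  assume S': "finite S'" "S' \<subseteq> S"
  define c' where "c' t = (\<Sum>s\<in>{s\<in>S'. h s = t}. c s)" for t
  have "(\<Sum>s\<in>S'. c s * Y s w) = (\<Sum>t\<in>h ` S'. c' t * X t w)" for w
  proof -
    have "(\<Sum>s\<in>S'. c s * Y s w) = (\<Sum>s\<in>S'. c s * X (h s) w)"
      using S' Y by (intro sum.cong) auto
    also have "\<dots> = (\<Sum>t\<in>h ` S'. \<Sum>s\<in>{s\<in>S'. h s = t}. c s * X (h s) w)"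
      by (rule sum.image_gen[OF S'(1)])
    also have "\<dots> = (\<Sum>t\<in>h ` S'. c' t * X t w)"
      unfolding c'_def sum_distrib_right by (intro sum.cong refl) auto
    finally show ?thesis .
  qed
  moreover have "centered_gaussian_rv M (\<lambda>w. \<Sum>t\<in>h ` S'. c' t * X t w)"
    using X S' h unfolding centered_gaussian_process_def by blast
  ultimately show "centered_gaussian_rv M (\<lambda>w. \<Sum>s\<in>S'. c s * Y s w)" by simp
qed

section \<open>The scanning family and the operator \<open>T\<close>\<close>

locale scanning_setting =
  fixes H :: "(real^'p) measure"
    and mu :: "real^'p \<Rightarrow> real^'q"
    and A :: "real \<Rightarrow> (real^'p) set"
  assumes H_prob: "prob_space H" and H_borel: "sets H = sets borel"
    and mu_L2: "\<forall>i. L2 H (\<lambda>x. mu x $ i)"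
    and Ctheta_pd: "pos_def_matrix (Ctheta H mu)"
    and scan: "scanning_family H A"
    and Cz_nonsing: "\<forall>z::real. invertible (Cz H mu A (ereal z))"
begin

sublocale H: prob_space H by (rule H_prob)

sublocale HH: pair_sigma_finite H H ..

abbreviation \<zeta> :: "real^'p \<Rightarrow> ereal" where "\<zeta> \<equiv> zx A"

abbreviation C :: "ereal \<Rightarrow> real^'q^'q" where "C \<equiv> Cz H mu A"

lemma space_H [simp]: "space H = UNIV"
  using H_borel sets_eq_imp_space_eq by fastforce

lemma A_sets [measurable]: "A z \<in> sets H"
  using scan unfolding scanning_family_def by auto

lemma A_mono: "z \<le> z' \<Longrightarrow> A z \<subseteq> A z'"
  using scan unfolding scanning_family_def by auto

lemma zeta_le: "x \<in> A z \<Longrightarrow> \<zeta> x \<le> ereal z"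
  unfolding zx_def by (rule Inf_lower) auto

lemma zeta_less_imp_mem: "\<zeta> x < ereal z \<Longrightarrow> x \<in> A z"
proof -
  assume "\<zeta> x < ereal z"
  then obtain z' where "x \<in> A z'" "ereal z' < ereal z"
    unfolding zx_def Inf_less_iff by auto
  then show ?thesis using A_mono[of z' z] by auto
qed

lemma zeta_eq_PInf_iff: "\<zeta> x = \<infinity> \<longleftrightarrow> x \<notin> (\<Union>z. A z)"
proof
  assume "x \<notin> (\<Union>z. A z)"
  then have "{ereal z |z. x \<in> A z} = {}" by auto
  then show "\<zeta> x = \<infinity>" unfolding zx_def by (simp add: top_ereal_def)
qed (use zeta_le in fastforce)

lemma zeta_eq_MInf_iff: "\<zeta> x = -\<infinity> \<longleftrightarrow> x \<in> (\<Inter>z. A z)"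
proof
  assume "x \<in> (\<Inter>z. A z)"
  then have le: "\<zeta> x \<le> ereal z" for z using zeta_le by auto
  show "\<zeta> x = -\<infinity>"
  proof (cases "\<zeta> x")
    case (real r) then show ?thesis using le[of "r - 1"] by auto
  next
    case PInf then show ?thesis using le[of 0] by auto
  qed auto
qed (use zeta_less_imp_mem in auto)

lemma Union_A_sets [measurable]: "(\<Union>z. A z) \<in> sets H"
proof -
  have "x \<in> (\<Union>n::nat. A (real n))" if "x \<in> A z" for x z
  proof -
    obtain n :: nat where "z \<le> real n" using real_arch_simple by blast
    then show ?thesis using A_mono that by blast
  qed
  then have "(\<Union>z. A z) = (\<Union>n::nat. A (real n))" by blast
  then show ?thesis by simp
qed

lemma Inter_A_sets [measurable]: "(\<Inter>z. A z) \<in> sets H"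
proof -
  have "x \<in> A z" if "\<forall>n::nat. x \<in> A (- real n)" for x z
  proof -
    obtain n :: nat where "- z \<le> real n" using real_arch_simple by blast
    then show ?thesis using A_mono[of "- real n" z] that by auto
  qed
  then have "(\<Inter>z. A z) = (\<Inter>n::nat. A (- real n))" by blast
  then show ?thesis by simp
qed

lemma zeta_measurable [measurable]: "\<zeta> \<in> borel_measurable H"
proof (rule borel_measurableI_less)
  fix y :: ereal
  have "{x \<in> space H. \<zeta> x < y} = (\<Union>r\<in>{r::real. r \<in> \<rat> \<and> ereal r < y}. A r)"
  proof safe
    fix x assume "\<zeta> x < y"
    then obtain t where t: "\<zeta> x < t" "t < y" using dense by blast
    then obtain t' where t': "t = ereal t'" by (cases t) auto
    obtain u where u: "\<zeta> x < u" "u < t" using t(1) dense by blast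
    then obtain u' where u': "u = ereal u'" using t' by (cases u) auto
    obtain r where r: "r \<in> \<rat>" "u' < r" "r < t'"
      using Rats_dense_in_real[of u' t'] u t' u' by auto
    have "\<zeta> x < ereal r"
      using order.strict_trans[OF u(1)[unfolded u'], of "ereal r"] r(2) by simp
    moreover have "ereal r < y"
      using order.strict_trans[of "ereal r" "ereal t'" y] r(3) t(2) t' by simp
    ultimately show "x \<in> (\<Union>r\<in>{r::real. r \<in> \<rat> \<and> ereal r < y}. A r)"
      using zeta_less_imp_mem \<open>r \<in> \<rat>\<close> by blast
  next
    fix x r assume "ereal r < y" "x \<in> A r"
    then show "\<zeta> x < y" using zeta_le[of x r] by auto
  qed auto
  moreover have "(\<Union>r\<in>{r::real. r \<in> \<rat> \<and> ereal r < y}. A r) \<in> sets H"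
    by (intro sets.countable_UN'') (auto intro: countable_subset[OF _ countable_rat])
  ultimately show "{x \<in> space H. \<zeta> x < y} \<in> sets H" by simp
qed

lemma zeta_sets [measurable]:
  "{x. \<zeta> x = c} \<in> sets H" "{x. \<zeta> x < c} \<in> sets H" "{x. c < \<zeta> x} \<in> sets H" "{x. \<zeta> x \<le> c} \<in> sets H"
  using measurable_sets[OF zeta_measurable, of "{c}"] measurable_sets[OF zeta_measurable, of "{..<c}"]
    measurable_sets[OF zeta_measurable, of "{c<..}"] measurable_sets[OF zeta_measurable, of "{..c}"]
  by (simp_all add: vimage_def)

lemma measure_A_increment_small:
  assumes "e > 0"
  obtains d where "d > 0" "\<And>a b. a \<le> b \<Longrightarrow> b - a < d \<Longrightarrow> measure H (A b) - measure H (A a) < e"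
proof -
  have "abs_continuous_real (\<lambda>z. measure H (A z))"
    using scan unfolding scanning_family_def by auto
  then obtain d where "d > 0" and d: "\<forall>(n::nat) (a::nat \<Rightarrow> real) b.
        (\<forall>i<n. a i \<le> b i) \<and> (\<forall>i<n. \<forall>j<n. i \<noteq> j \<longrightarrow> b i \<le> a j \<or> b j \<le> a i) \<and>
        (\<Sum>i<n. b i - a i) < d \<longrightarrow> (\<Sum>i<n. \<bar>measure H (A (b i)) - measure H (A (a i))\<bar>) < e"
    using assms unfolding abs_continuous_real_def by blast
  have "measure H (A b) - measure H (A a) < e" if "a \<le> b" "b - a < d" for a b
    using d[rule_format, of 1 "\<lambda>_. a" "\<lambda>_. b"] that by simp
  then show ?thesis using that[OF \<open>d > 0\<close>] by blast
qed

lemma measure_zeta_level_eq_0: "measure H {x. \<zeta> x = c} = 0"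
proof (cases c)
  case (real c')
  have le: "measure H {x. \<zeta> x = c} \<le> e" if "e > 0" for e
  proof -
    obtain d where d: "d > 0" "\<And>a b. a \<le> b \<Longrightarrow> b - a < d \<Longrightarrow> measure H (A b) - measure H (A a) < e"
      using measure_A_increment_small[OF \<open>e > 0\<close>] by blast
    have sub: "{x. \<zeta> x = c} \<subseteq> A (c' + d/3) - A (c' - d/3)"
    proof
      fix x assume "x \<in> {x. \<zeta> x = c}"
      then have "\<zeta> x = ereal c'" using real by simp
      then show "x \<in> A (c' + d/3) - A (c' - d/3)"
        using zeta_less_imp_mem[of x "c' + d/3"] zeta_le[of x "c' - d/3"] d(1) by auto
    qed
    have "measure H {x. \<zeta> x = c} \<le> measure H (A (c' + d/3) - A (c' - d/3))"
      by (rule H.finite_measure_mono[OF sub]) measurable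
    also have "\<dots> = measure H (A (c' + d/3)) - measure H (A (c' - d/3))"
      by (rule H.finite_measure_Diff) (use A_mono[of "c' - d/3" "c' + d/3"] d(1) in auto)
    also have "\<dots> < e" using d by auto
    finally show ?thesis by simp
  qed
  have "measure H {x. \<zeta> x = c} \<le> 0"
    by (rule field_le_epsilon) (use le in simp)
  then show ?thesis using measure_nonneg[of H "{x. \<zeta> x = c}"] by linarith
next
  case PInf
  then have "{x. \<zeta> x = c} = space H - (\<Union>z. A z)" using zeta_eq_PInf_iff by auto
  then show ?thesis
    using H.prob_compl[OF Union_A_sets] scan unfolding scanning_family_def by simp
next
  case MInf
  then have "{x. \<zeta> x = c} = (\<Inter>z. A z)" using zeta_eq_MInf_iff by auto
  then show ?thesis using scan unfolding scanning_family_def by simp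
qed

lemma AE_zeta_neq: "AE x in H. \<zeta> x \<noteq> c"
proof -
  have "{x. \<zeta> x = c} \<in> null_sets H"
    using measure_zeta_level_eq_0[of c] by (simp add: H.emeasure_eq_measure null_sets_def)
  then show ?thesis by (rule AE_I') auto
qed

lemma mem_Aext_iff:
  assumes "\<zeta> x \<noteq> c"
  shows "x \<in> Aext A c \<longleftrightarrow> \<zeta> x < c"
proof (cases c)
  case (real r)
  then show ?thesis using zeta_less_imp_mem[of x r] zeta_le[of x r] assms by (auto simp: Aext_def)
next
  case PInf
  then show ?thesis using zeta_eq_PInf_iff[of x] assms by (auto simp: Aext_def)
next
  case MInf
  then show ?thesis using zeta_eq_MInf_iff[of x] assms by (auto simp: Aext_def)
qed

lemma AE_mem_Aext_iff: "AE x in H. x \<in> Aext A c \<longleftrightarrow> \<zeta> x < c"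
  using AE_zeta_neq[of c] by eventually_elim (rule mem_Aext_iff)

lemma Aext_sets [measurable]: "Aext A c \<in> sets H"
  unfolding Aext_def by auto

lemma L2_mu_component: "L2 H (\<lambda>x. mu x $ i)"
  using mu_L2 by auto

lemma mu_component_measurable [measurable]: "(\<lambda>x. mu x $ i) \<in> borel_measurable H"
  using L2_mu_component by (rule L2_measurable)

lemma mu_measurable [measurable]: "mu \<in> borel_measurable H"
  by (simp add: borel_measurable_vec_iff)

lemma L2_inner_mu: "L2 H (\<lambda>x. v \<bullet> mu x)"
  by (rule L2_inner[OF L2_mu_component])

lemma integrable_norm_mu_square: "integrable H (\<lambda>x. (norm (mu x))\<^sup>2)"
  using L2_norm[OF L2_mu_component] unfolding L2_def by auto

lemma integrable_abs_mult_norm_mu: "L2 H g \<Longrightarrow> integrable H (\<lambda>y. \<bar>g y\<bar> * norm (mu y))"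
  using L2_integrable_mult[OF L2_abs L2_norm[OF L2_mu_component]] by blast


definition moment_matrix :: "(real^'p) set \<Rightarrow> real^'q^'q" where
  "moment_matrix S = (\<chi> i j. \<integral>x. indicator S x * (mu x $ i * mu x $ j) \<partial>H)"

lemma integrable_indicator_mu_mu:
  "S \<in> sets H \<Longrightarrow> integrable H (\<lambda>x. indicator S x * (mu x $ i * mu x $ j))"
  using L2_integrable_indicator_mult[OF _ L2_mu_component L2_mu_component] .

lemma moment_matrix_quadratic_form:
  assumes S: "S \<in> sets H"
  shows "u \<bullet> (moment_matrix S *v w) = (\<integral>x. indicator S x * ((u \<bullet> mu x) * (w \<bullet> mu x)) \<partial>H)"
proof -
  have "u \<bullet> (moment_matrix S *v w) =
      (\<Sum>i\<in>UNIV. \<Sum>j\<in>UNIV. u $ i * w $ j * (\<integral>x. indicator S x * (mu x $ i * mu x $ j) \<partial>H))"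
    by (simp add: inner_vec_def matrix_vector_mult_def moment_matrix_def sum_distrib_left mult_ac)
  also have "\<dots> = (\<integral>x. (\<Sum>i\<in>UNIV. \<Sum>j\<in>UNIV. u $ i * w $ j * (indicator S x * (mu x $ i * mu x $ j))) \<partial>H)"
    using integrable_indicator_mu_mu[OF S] by (simp add: Bochner_Integration.integral_sum)
  also have "\<dots> = (\<integral>x. indicator S x * ((u \<bullet> mu x) * (w \<bullet> mu x)) \<partial>H)"
    by (rule Bochner_Integration.integral_cong, auto simp: inner_vec_def sum_distrib_left sum_distrib_right mult_ac)
      (subst sum.swap, simp add: mult_ac)
  finally show ?thesis .
qed

lemma psd_moment_matrix: "S \<in> sets H \<Longrightarrow> psd_matrix (moment_matrix S)"
  unfolding psd_matrix_def
  by (simp add: moment_matrix_quadratic_form)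
    (simp add: vec_eq_iff transpose_def moment_matrix_def mult.commute)

lemma moment_matrix_mono:
  assumes "S \<in> sets H" "T \<in> sets H" "S \<subseteq> T"
  shows "v \<bullet> (moment_matrix S *v v) \<le> v \<bullet> (moment_matrix T *v v)"
proof -
  have "(\<integral>x. indicator S x * ((v \<bullet> mu x) * (v \<bullet> mu x)) \<partial>H)
      \<le> (\<integral>x. indicator T x * ((v \<bullet> mu x) * (v \<bullet> mu x)) \<partial>H)"
    using assms L2_integrable_indicator_mult[OF _ L2_inner_mu L2_inner_mu]
    by (intro integral_mono) (auto split: split_indicator)
  then show ?thesis using assms by (simp add: moment_matrix_quadratic_form)
qed

lemma moment_matrix_cong_AE:
  assumes "AE x in H. x \<in> S \<longleftrightarrow> x \<in> T" "S \<in> sets H" "T \<in> sets H"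
  shows "moment_matrix S = moment_matrix T"
proof -
  have "(\<integral>x. indicator S x * (mu x $ i * mu x $ j) \<partial>H) = (\<integral>x. indicator T x * (mu x $ i * mu x $ j) \<partial>H)" for i j
    using assms(2,3)[THEN integrable_indicator_mu_mu, THEN borel_measurable_integrable] assms(1)
    by (intro integral_cong_AE) (auto simp: indicator_def)
  then show ?thesis by (simp add: moment_matrix_def vec_eq_iff)
qed

lemma moment_matrix_Diff:
  assumes "S \<in> sets H" "S' \<in> sets H" "S' \<subseteq> S"
  shows "moment_matrix (S - S') = moment_matrix S - moment_matrix S'"
proof -
  have "(\<integral>x. indicator (S - S') x * (mu x $ i * mu x $ j) \<partial>H)
      = (\<integral>x. indicator S x * (mu x $ i * mu x $ j) - indicator S' x * (mu x $ i * mu x $ j) \<partial>H)" for i j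
    using assms by (intro Bochner_Integration.integral_cong) (auto simp: indicator_def)
  then show ?thesis
    using assms integrable_indicator_mu_mu by (simp add: moment_matrix_def vec_eq_iff)
qed

lemma C_eq_moment_matrix: "C c = moment_matrix {x. c < \<zeta> x}"
proof -
  have "C c = moment_matrix (- Aext A c)"
    unfolding Cz_def moment_matrix_def set_lebesgue_integral_def by simp
  also have "\<dots> = moment_matrix {x. c < \<zeta> x}"
    using AE_mem_Aext_iff[of c] AE_zeta_neq[of c] sets.compl_sets[OF Aext_sets[of c]]
    by (intro moment_matrix_cong_AE) (auto simp: Compl_eq_Diff_UNIV)
  finally show ?thesis .
qed

lemma psd_C: "psd_matrix (C c)"
  by (simp add: C_eq_moment_matrix psd_moment_matrix)

lemma C_antimono: "c \<le> c' \<Longrightarrow> v \<bullet> (C c' *v v) \<le> v \<bullet> (C c *v v)"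
  unfolding C_eq_moment_matrix by (rule moment_matrix_mono) auto

lemma C_MInf: "C (-\<infinity>) = Ctheta H mu"
proof -
  have "C (-\<infinity>) = moment_matrix UNIV"
    unfolding C_eq_moment_matrix
    by (rule moment_matrix_cong_AE) (use AE_zeta_neq[of "-\<infinity>"] zeta_sets(3)[of "-\<infinity>"] sets.top[of H] in auto)
  also have "\<dots> = Ctheta H mu"
    unfolding Ctheta_def moment_matrix_def by simp
  finally show ?thesis .
qed

lemma invertible_C: "c \<noteq> \<infinity> \<Longrightarrow> invertible (C c)"
  using Cz_nonsing pos_def_matrix_invertible[OF Ctheta_pd] C_MInf by (cases c) auto

lemma moment_matrix_zeta_interval:
  "moment_matrix {x. c < \<zeta> x \<and> \<zeta> x \<le> ereal s} = (if c \<le> ereal s then C c - C (ereal s) else 0)"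
proof (cases "c \<le> ereal s")
  case True
  then have "{x. c < \<zeta> x \<and> \<zeta> x \<le> ereal s} = {x. c < \<zeta> x} - {x. ereal s < \<zeta> x}"
    "{x. ereal s < \<zeta> x} \<subseteq> {x. c < \<zeta> x}" by auto
  then show ?thesis using True by (simp add: moment_matrix_Diff C_eq_moment_matrix)
next
  case False
  then have "{x. c < \<zeta> x \<and> \<zeta> x \<le> ereal s} = {}" by auto
  then show ?thesis using False by (simp add: moment_matrix_def vec_eq_iff)
qed

definition V :: "real^'p \<Rightarrow> real^'q" where
  "V y = mu y v* matrix_inv (C (\<zeta> y))"

lemma C_mult_V:
  assumes "\<zeta> y \<noteq> \<infinity>"
  shows "C (\<zeta> y) *v V y = mu y"
proof -
  have "C (\<zeta> y) *v V y = V y v* C (\<zeta> y)"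
    using psd_C unfolding psd_matrix_def by (metis transpose_matrix_vector)
  also have "\<dots> = mu y v* (matrix_inv (C (\<zeta> y)) ** C (\<zeta> y))"
    unfolding V_def by (simp add: vector_matrix_mul_assoc)
  also have "\<dots> = mu y"
    using invertible_matrix_inv(2)[OF invertible_C[OF assms]] by simp
  finally show ?thesis .
qed

lemma V_bounded_on_sublevel:
  obtains K where "K > 0" "\<And>y. \<zeta> y \<le> ereal s \<Longrightarrow> norm (V y) \<le> K * norm (mu y)"
proof -
  obtain l where l: "l > 0" "\<And>v. l * (norm v)\<^sup>2 \<le> v \<bullet> (C (ereal s) *v v)"
    using psd_matrix_invertible_coercive[OF psd_C invertible_C[of "ereal s", simplified]] by blast
  have "norm (V y) \<le> (1 / l) * norm (mu y)" if y: "\<zeta> y \<le> ereal s" for y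
  proof -
    have "l * (norm (V y))\<^sup>2 \<le> V y \<bullet> (C (ereal s) *v V y)" by (rule l(2))
    also have "\<dots> \<le> V y \<bullet> (C (\<zeta> y) *v V y)" by (rule C_antimono[OF y])
    also have "\<dots> = V y \<bullet> mu y" using y by (subst C_mult_V) auto
    also have "\<dots> \<le> norm (V y) * norm (mu y)" by (rule norm_cauchy_schwarz)
    finally have "l * (norm (V y))\<^sup>2 \<le> norm (V y) * norm (mu y)" .
    then show ?thesis
      using l(1) by (cases "V y = 0") (simp_all add: power2_eq_square field_simps)
  qed
  then show ?thesis using that[of "1 / l"] l(1) by simp
qed

lemma C_zeta_entry_measurable [measurable]: "(\<lambda>y. C (\<zeta> y) $ i $ j) \<in> borel_measurable H"
proof -
  have "(\<lambda>(y, x). indicator {x. \<zeta> y < \<zeta> x} x * (mu x $ i * mu x $ j)) \<in> borel_measurable (H \<Otimes>\<^sub>M H)"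
    unfolding indicator_def by measurable
  then have "(\<lambda>y. \<integral>x. indicator {x. \<zeta> y < \<zeta> x} x * (mu x $ i * mu x $ j) \<partial>H) \<in> borel_measurable H"
    by (rule H.borel_measurable_lebesgue_integral[of "\<lambda>y x. indicator {x. \<zeta> y < \<zeta> x} x * (mu x $ i * mu x $ j)", simplified])
  then show ?thesis by (simp add: C_eq_moment_matrix moment_matrix_def)
qed

text \<open>Off the null set where \<open>\<zeta> = \<infinity>\<close>, \<open>V\<close> solves a linear system with measurable
  coefficients, so Cramer's rule gives its measurability.\<close>
lemma V_measurable [measurable]: "V \<in> borel_measurable H"
proof -
  define W where "W y = (\<chi> k. det (\<chi> i j. if j = k then mu y $ i else C (\<zeta> y) $ i $ j) / det (C (\<zeta> y)))" for y
  have eq: "V y = (if \<zeta> y = \<infinity> then mu y v* matrix_inv (C \<infinity>) else W y)" for y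
  proof (cases "\<zeta> y = \<infinity>")
    case False
    have "det (C (\<zeta> y)) \<noteq> 0" using invertible_C[OF False] by (simp add: invertible_det_nz)
    then have "C (\<zeta> y) *v V y = mu y \<longleftrightarrow> V y = W y" unfolding W_def by (rule cramer)
    then show ?thesis using C_mult_V[OF False] False by simp
  qed (simp add: V_def)
  have "(\<lambda>y. W y $ k) \<in> borel_measurable H" for k
    unfolding W_def by (simp add: borel_measurable_divide borel_measurable_det)
  then have "W \<in> borel_measurable H"
    unfolding borel_measurable_vec_iff by blast
  moreover have "(\<lambda>y. mu y v* matrix_inv (C \<infinity>)) \<in> borel_measurable H"
    unfolding borel_measurable_vec_iff by (simp add: vector_matrix_mult_def)
  ultimately show ?thesis
    unfolding eq[abs_def] by measurable
qed

definition gV :: "(real^'p \<Rightarrow> real) \<Rightarrow> real^'p \<Rightarrow> real^'q" where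
  "gV g y = g y *\<^sub>R V y"

definition Vint :: "(real^'p \<Rightarrow> real) \<Rightarrow> (real^'p) set \<Rightarrow> real^'q" where
  "Vint g S = (\<integral>y. indicator S y *\<^sub>R gV g y \<partial>H)"

lemma gV_measurable [measurable]:
  assumes "L2 H g"
  shows "gV g \<in> borel_measurable H"
proof -
  have [measurable]: "g \<in> borel_measurable H" using assms by (rule L2_measurable)
  show ?thesis unfolding gV_def[abs_def] by measurable
qed

lemma Top_eq_Vint:
  assumes g: "L2 H g"
  shows "Top H mu A g x = Vint g {y. \<zeta> y < \<zeta> x} \<bullet> mu x"
proof -
  have "(LINT y:Aext A (\<zeta> x)|H. g y *\<^sub>R (mu y v* matrix_inv (C (\<zeta> y))))
      = (\<integral>y. indicator (Aext A (\<zeta> x)) y *\<^sub>R gV g y \<partial>H)"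
    unfolding set_lebesgue_integral_def gV_def V_def ..
  also have "\<dots> = Vint g {y. \<zeta> y < \<zeta> x}"
    unfolding Vint_def
  proof (rule integral_cong_AE)
    show "AE y in H. indicator (Aext A (\<zeta> x)) y *\<^sub>R gV g y = indicator {y. \<zeta> y < \<zeta> x} y *\<^sub>R gV g y"
      using AE_mem_Aext_iff[of "\<zeta> x"] by eventually_elim (auto simp: indicator_def)
  qed (simp_all add: g)
  finally show ?thesis unfolding Top_def by simp
qed

lemma Vint_zeta_measurable:
  assumes "L2 H g"
  shows "(\<lambda>x. Vint g {y. \<zeta> y < \<zeta> x}) \<in> borel_measurable H"
proof -
  have "(\<lambda>(x, y). indicator {y. \<zeta> y < \<zeta> x} y *\<^sub>R gV g y) \<in> borel_measurable (H \<Otimes>\<^sub>M H)"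
    unfolding indicator_def using assms by measurable
  then show ?thesis
    unfolding Vint_def
    by (rule H.borel_measurable_lebesgue_integral[of "\<lambda>x y. indicator {y. \<zeta> y < \<zeta> x} y *\<^sub>R gV g y", simplified])
qed

lemma Kop_measurable [measurable]:
  assumes "L2 H g"
  shows "Kop H mu A g \<in> borel_measurable H"
proof -
  have [measurable]: "(\<lambda>x. Vint g {y. \<zeta> y < \<zeta> x}) \<in> borel_measurable H"
    using Vint_zeta_measurable[OF assms] .
  have [measurable]: "g \<in> borel_measurable H" using assms by (rule L2_measurable)
  show ?thesis
    unfolding Kop_def[abs_def] Top_eq_Vint[OF assms] by measurable
qed

end

section \<open>Truncation at a sublevel set of \<open>z\<close>\<close>

text \<open>A constant \<open>K\<close> as below exists for every level \<open>s\<close> (\<open>V_bounded_on_sublevel\<close>); on \<open>R\<close> it dominates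
  all integrands below by multiples of \<open>\<bar>g\<bar> * norm mu\<close> or \<open>(norm mu)\<^sup>2\<close>.\<close>
locale scanning_truncation = scanning_setting H mu A
  for H :: "(real^'p) measure" and mu :: "real^'p \<Rightarrow> real^'q" and A :: "real \<Rightarrow> (real^'p) set" +
  fixes g :: "real^'p \<Rightarrow> real" and s K :: real
  assumes g_L2: "L2 H g" and K_pos: "0 < K"
    and V_le: "\<And>y. \<zeta> y \<le> ereal s \<Longrightarrow> norm (V y) \<le> K * norm (mu y)"
begin

abbreviation R :: "(real^'p) set" where "R \<equiv> {y. \<zeta> y \<le> ereal s}"

abbreviation T :: "real^'p \<Rightarrow> real" where "T \<equiv> Top H mu A g"

abbreviation a_s :: "real^'q" where "a_s \<equiv> Vint g R"

abbreviation B :: real where "B \<equiv> K * (\<integral>y. \<bar>g y\<bar> * norm (mu y) \<partial>H)"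

lemma g_measurable [measurable]: "g \<in> borel_measurable H"
  using g_L2 by (rule L2_measurable)

lemma gV_g_measurable [measurable]: "gV g \<in> borel_measurable H"
  using gV_measurable[OF g_L2] .

lemma T_measurable [measurable]: "T \<in> borel_measurable H"
proof -
  have [measurable]: "(\<lambda>x. Vint g {y. \<zeta> y < \<zeta> x}) \<in> borel_measurable H"
    using Vint_zeta_measurable[OF g_L2] .
  show ?thesis unfolding Top_eq_Vint[OF g_L2, abs_def] by measurable
qed

lemma integrable_g_mu: "integrable H (\<lambda>y. \<bar>g y\<bar> * norm (mu y))"
  using integrable_abs_mult_norm_mu[OF g_L2] .

lemma B_nonneg: "0 \<le> B"
  using K_pos by (simp add: integral_nonneg_AE)

lemma gV_norm_le:
  assumes "\<zeta> y \<le> ereal s"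
  shows "norm (gV g y) \<le> K * (\<bar>g y\<bar> * norm (mu y))"
proof -
  have "\<bar>g y\<bar> * norm (V y) \<le> \<bar>g y\<bar> * (K * norm (mu y))"
    using V_le[OF assms] by (rule mult_left_mono) simp
  then show ?thesis by (simp add: gV_def mult_ac)
qed

lemma gV_inner_le: "\<zeta> y \<le> ereal s \<Longrightarrow> \<bar>gV g y \<bullet> w\<bar> \<le> K * (\<bar>g y\<bar> * norm (mu y)) * norm w"
  using Cauchy_Schwarz_ineq2[of "gV g y" w] gV_norm_le[of y]
  by (meson mult_right_mono norm_ge_zero order_trans)

lemma integrable_indicator_gV:
  assumes "S \<in> sets H" "S \<subseteq> R"
  shows "integrable H (\<lambda>y. indicator S y *\<^sub>R gV g y)"
proof (rule integrable_dominated)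
  show "integrable H (\<lambda>y. K * (\<bar>g y\<bar> * norm (mu y)))" using integrable_g_mu by simp
  show "norm (indicator S y *\<^sub>R gV g y) \<le> K * (\<bar>g y\<bar> * norm (mu y))" for y
    using assms(2) gV_norm_le[of y] K_pos by (auto simp: indicator_def)
qed (use assms g_L2 in measurable)

lemma Vint_inner:
  assumes "S \<in> sets H" "S \<subseteq> R"
  shows "Vint g S \<bullet> w = (\<integral>y. indicator S y * (gV g y \<bullet> w) \<partial>H)"
  using integral_inner_left[OF integrable_indicator_gV[OF assms], of w]
  by (simp add: Vint_def)

lemma Vint_norm_le:
  assumes "S \<in> sets H" "S \<subseteq> R"
  shows "norm (Vint g S) \<le> B"
proof -
  have "norm (Vint g S) \<le> (\<integral>y. norm (indicator S y *\<^sub>R gV g y) \<partial>H)"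
    unfolding Vint_def by (rule integral_norm_bound)
  also have "\<dots> \<le> (\<integral>y. K * (\<bar>g y\<bar> * norm (mu y)) \<partial>H)"
  proof (rule integral_mono)
    show "integrable H (\<lambda>y. norm (indicator S y *\<^sub>R gV g y))"
      using integrable_indicator_gV[OF assms] by (rule integrable_norm)
    show "norm (indicator S y *\<^sub>R gV g y) \<le> K * (\<bar>g y\<bar> * norm (mu y))" for y
      using assms(2) gV_norm_le[of y] K_pos by (auto simp: indicator_def)
  qed (use integrable_g_mu in simp)
  finally show ?thesis by simp
qed

lemma T_eq_integral:
  assumes "x \<in> R"
  shows "T x = (\<integral>y. indicator {y. \<zeta> y < \<zeta> x} y * (gV g y \<bullet> mu x) \<partial>H)"
proof -
  have "{y. \<zeta> y < \<zeta> x} \<subseteq> R" using assms by auto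
  then show ?thesis by (simp add: Top_eq_Vint[OF g_L2] Vint_inner)
qed

lemma T_abs_le:
  assumes "x \<in> R"
  shows "\<bar>T x\<bar> \<le> B * norm (mu x)"
proof -
  have "\<bar>T x\<bar> \<le> norm (Vint g {y. \<zeta> y < \<zeta> x}) * norm (mu x)"
    unfolding Top_eq_Vint[OF g_L2] by (rule Cauchy_Schwarz_ineq2)
  also have "\<dots> \<le> B * norm (mu x)"
    using assms by (intro mult_right_mono Vint_norm_le) auto
  finally show ?thesis .
qed

lemma integrable_R_T_square: "integrable H (\<lambda>x. indicator R x * (T x)\<^sup>2)"
proof (rule integrable_dominated)
  show "integrable H (\<lambda>x. B\<^sup>2 * (norm (mu x))\<^sup>2)" using integrable_norm_mu_square by simp
  show "norm (indicator R x * (T x)\<^sup>2) \<le> B\<^sup>2 * (norm (mu x))\<^sup>2" for x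
  proof (cases "x \<in> R")
    case True
    have "\<bar>T x\<bar>\<^sup>2 \<le> (B * norm (mu x))\<^sup>2" by (intro power_mono T_abs_le True) simp
    then show ?thesis using True by (simp add: power_mult_distrib)
  qed simp
qed measurable

lemma integrable_R_g_T: "integrable H (\<lambda>x. indicator R x * (g x * T x))"
proof (rule integrable_dominated)
  show "integrable H (\<lambda>y. B * (\<bar>g y\<bar> * norm (mu y)))" using integrable_g_mu by simp
  show "norm (indicator R y * (g y * T y)) \<le> B * (\<bar>g y\<bar> * norm (mu y))" for y
  proof (cases "y \<in> R")
    case True
    have "\<bar>g y\<bar> * \<bar>T y\<bar> \<le> \<bar>g y\<bar> * (B * norm (mu y))" by (intro mult_left_mono T_abs_le True) simp
    then show ?thesis using True by (simp add: abs_mult mult_ac)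
  qed (simp add: B_nonneg)
qed measurable

lemma integrable_R_T_mu: "integrable H (\<lambda>x. indicator R x * (T x * mu x $ i))"
proof (rule integrable_dominated)
  show "integrable H (\<lambda>x. B * (norm (mu x))\<^sup>2)" using integrable_norm_mu_square by simp
  show "norm (indicator R x * (T x * mu x $ i)) \<le> B * (norm (mu x))\<^sup>2" for x
  proof (cases "x \<in> R")
    case True
    have "\<bar>T x\<bar> * \<bar>mu x $ i\<bar> \<le> (B * norm (mu x)) * norm (mu x)"
      by (intro mult_mono T_abs_le True component_le_norm_cart) (use B_nonneg in auto)
    then show ?thesis using True by (simp add: abs_mult power2_eq_square mult_ac)
  qed (simp add: B_nonneg)
qed measurable

text \<open>Exchanging the order of integration in \<open>\<integral>\<^sub>R g T dH\<close> produces \<open>\<integral>\<^sub>R Tadj dH\<close>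
  (\<open>integral_R_Tadj\<close> below).\<close>
definition Tadj :: "real^'p \<Rightarrow> real" where
  "Tadj y = (\<integral>y'. indicator R y' * indicator {y'. \<zeta> y < \<zeta> y'} y' * (g y' * (gV g y \<bullet> mu y')) \<partial>H)"

lemma Tadj_measurable [measurable]: "Tadj \<in> borel_measurable H"
proof -
  have "(\<lambda>(y, y'). indicator R y' * indicator {y'. \<zeta> y < \<zeta> y'} y' * (g y' * (gV g y \<bullet> mu y')))
      \<in> borel_measurable (H \<Otimes>\<^sub>M H)"
    unfolding indicator_def by measurable
  then show ?thesis
    unfolding Tadj_def[abs_def]
    by (rule H.borel_measurable_lebesgue_integral[of "\<lambda>y y'. indicator R y' * indicator {y'. \<zeta> y < \<zeta> y'} y' * (g y' * (gV g y \<bullet> mu y'))", simplified])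
qed

lemma Tadj_kernel_abs_le:
  assumes "y \<in> R"
  shows "\<bar>indicator R y' * indicator {y'. \<zeta> y < \<zeta> y'} y' * (g y' * (gV g y \<bullet> mu y'))\<bar>
    \<le> K * (\<bar>g y\<bar> * norm (mu y)) * (\<bar>g y'\<bar> * norm (mu y'))"
proof -
  have "\<bar>indicator R y' * indicator {y'. \<zeta> y < \<zeta> y'} y' * (g y' * (gV g y \<bullet> mu y'))\<bar>
      \<le> \<bar>g y'\<bar> * \<bar>gV g y \<bullet> mu y'\<bar>" by (simp add: abs_mult indicator_def)
  also have "\<dots> \<le> \<bar>g y'\<bar> * (K * (\<bar>g y\<bar> * norm (mu y)) * norm (mu y'))"
    using assms by (intro mult_left_mono gV_inner_le) auto
  finally show ?thesis by (simp add: mult_ac)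
qed

lemma integrable_Tadj_kernel:
  assumes "y \<in> R"
  shows "integrable H (\<lambda>y'. indicator R y' * indicator {y'. \<zeta> y < \<zeta> y'} y' * (g y' * (gV g y \<bullet> mu y')))"
proof (rule integrable_dominated[where u = "\<lambda>y'. K * (\<bar>g y\<bar> * norm (mu y)) * (\<bar>g y'\<bar> * norm (mu y'))"])
  show "(\<lambda>y'. indicator R y' * indicator {y'. \<zeta> y < \<zeta> y'} y' * (g y' * (gV g y \<bullet> mu y'))) \<in> borel_measurable H"
    by measurable
qed (use integrable_g_mu Tadj_kernel_abs_le[OF assms] in simp_all)

lemma integrable_R_Tadj: "integrable H (\<lambda>y. indicator R y * Tadj y)"
proof (rule integrable_dominated)
  let ?G = "\<integral>y'. \<bar>g y'\<bar> * norm (mu y') \<partial>H"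
  show "integrable H (\<lambda>y. K * (\<bar>g y\<bar> * norm (mu y)) * ?G)"
    using integrable_g_mu by simp
  show "norm (indicator R y * Tadj y) \<le> K * (\<bar>g y\<bar> * norm (mu y)) * ?G" for y
  proof (cases "y \<in> R")
    case True
    have "norm (Tadj y) \<le> (\<integral>y'. norm (indicator R y' * indicator {y'. \<zeta> y < \<zeta> y'} y' * (g y' * (gV g y \<bullet> mu y'))) \<partial>H)"
      unfolding Tadj_def by (rule integral_norm_bound)
    also have "\<dots> \<le> (\<integral>y'. K * (\<bar>g y\<bar> * norm (mu y)) * (\<bar>g y'\<bar> * norm (mu y')) \<partial>H)"
    proof (rule integral_mono)
      show "integrable H (\<lambda>y'. norm (indicator R y' * indicator {y'. \<zeta> y < \<zeta> y'} y' * (g y' * (gV g y \<bullet> mu y'))))"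
        using integrable_Tadj_kernel[OF True] by (rule integrable_norm)
    qed (use integrable_g_mu Tadj_kernel_abs_le[OF True] in simp_all)
    finally show ?thesis using True by simp
  qed (use K_pos in \<open>simp add: integral_nonneg_AE\<close>)
qed measurable

lemma integral_R_Tadj: "(\<integral>y. indicator R y * Tadj y \<partial>H) = (\<integral>y. indicator R y * (g y * T y) \<partial>H)"
proof -
  define F where "F y y' = indicator R y * (indicator R y' * indicator {y'. \<zeta> y < \<zeta> y'} y' * (g y' * (gV g y \<bullet> mu y')))" for y y'
  have "(\<integral>y. \<integral>y'. F y y' \<partial>H \<partial>H) = (\<integral>y'. \<integral>y. F y y' \<partial>H \<partial>H)"
  proof (rule HH.Fubini_integral_product_bound)
    show "(\<lambda>(y, y'). F y y') \<in> borel_measurable (H \<Otimes>\<^sub>M H)"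
      unfolding F_def indicator_def by measurable
    show "\<bar>F y y'\<bar> \<le> K * (\<bar>g y\<bar> * norm (mu y)) * (\<bar>g y'\<bar> * norm (mu y'))" for y y'
      using Tadj_kernel_abs_le[of y y'] K_pos by (cases "y \<in> R") (auto simp: F_def abs_mult)
  qed (use integrable_g_mu in simp_all)
  moreover have "(\<integral>y'. F y y' \<partial>H) = indicator R y * Tadj y" for y
    unfolding F_def Tadj_def by simp
  moreover have "(\<integral>y. F y y' \<partial>H) = indicator R y' * (g y' * T y')" for y'
  proof (cases "y' \<in> R")
    case True
    have "F y y' = g y' * (indicator {y. \<zeta> y < \<zeta> y'} y * (gV g y \<bullet> mu y'))" for y
      using True by (cases "\<zeta> y < \<zeta> y'") (auto simp: F_def)
    then show ?thesis using True by (simp add: T_eq_integral)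
  qed (simp add: F_def)
  ultimately show ?thesis by simp
qed

definition pair_kernel :: "real^'p \<Rightarrow> real^'p \<Rightarrow> real" where
  "pair_kernel y y' = (if \<zeta> y' \<le> \<zeta> y then g y * (gV g y' \<bullet> mu y) else g y' * (gV g y \<bullet> mu y'))"

lemma gV_inner_C_zeta:
  assumes "\<zeta> y \<noteq> \<infinity>"
  shows "gV g y \<bullet> (C (\<zeta> y) *v w) = g y * (w \<bullet> mu y)"
proof -
  have "gV g y \<bullet> (C (\<zeta> y) *v w) = w \<bullet> (C (\<zeta> y) *v gV g y)"
    by (rule psd_matrix_inner_commute[OF psd_C])
  also have "\<dots> = g y * (w \<bullet> mu y)"
    using C_mult_V[OF assms] by (simp add: gV_def matrix_vector_mult_scaleR)
  finally show ?thesis .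
qed

text \<open>Integrating out the variable with the largest \<open>\<zeta>\<close>: the second moment of \<open>\<mu>\<close> over
  \<open>max (\<zeta> y) (\<zeta> y') < \<zeta> \<le> s\<close> is \<open>C (max (\<zeta> y) (\<zeta> y')) - C s\<close>, and \<open>C (\<zeta> y)\<close> cancels
  the inverse hidden in \<open>gV g y\<close>.\<close>
lemma integral_pair_moment:
  "(\<integral>x. indicator {x. \<zeta> y < \<zeta> x \<and> \<zeta> y' < \<zeta> x \<and> \<zeta> x \<le> ereal s} x * ((gV g y \<bullet> mu x) * (gV g y' \<bullet> mu x)) \<partial>H)
   = indicator R y * indicator R y' * (pair_kernel y y' - gV g y \<bullet> (C (ereal s) *v gV g y'))"
proof -
  have eq: "{x. \<zeta> y < \<zeta> x \<and> \<zeta> y' < \<zeta> x \<and> \<zeta> x \<le> ereal s} = {x. max (\<zeta> y) (\<zeta> y') < \<zeta> x \<and> \<zeta> x \<le> ereal s}"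
    by auto
  have "(\<integral>x. indicator {x. \<zeta> y < \<zeta> x \<and> \<zeta> y' < \<zeta> x \<and> \<zeta> x \<le> ereal s} x * ((gV g y \<bullet> mu x) * (gV g y' \<bullet> mu x)) \<partial>H)
      = gV g y \<bullet> (moment_matrix {x. max (\<zeta> y) (\<zeta> y') < \<zeta> x \<and> \<zeta> x \<le> ereal s} *v gV g y')"
    unfolding eq by (rule moment_matrix_quadratic_form[symmetric]) (simp add: Collect_conj_eq)
  also have "\<dots> = indicator R y * indicator R y' * (pair_kernel y y' - gV g y \<bullet> (C (ereal s) *v gV g y'))"
  proof (cases "y \<in> R \<and> y' \<in> R")
    case True
    then have ne: "\<zeta> y \<noteq> \<infinity>" "\<zeta> y' \<noteq> \<infinity>" and "max (\<zeta> y) (\<zeta> y') \<le> ereal s" by auto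
    moreover have "gV g y \<bullet> (C (max (\<zeta> y) (\<zeta> y')) *v gV g y') = pair_kernel y y'"
      using gV_inner_C_zeta[OF ne(1), of "gV g y'"] gV_inner_C_zeta[OF ne(2), of "gV g y"]
        psd_matrix_inner_commute[OF psd_C, of "gV g y" _ "gV g y'"]
      by (auto simp: pair_kernel_def max_def)
    ultimately show ?thesis using True
      unfolding moment_matrix_zeta_interval
      by (simp add: matrix_vector_mult_diff_rdistrib inner_diff_right)
  next
    case False
    then have "\<not> max (\<zeta> y) (\<zeta> y') \<le> ereal s" by auto
    then show ?thesis using False unfolding moment_matrix_zeta_interval by auto
  qed
  finally show ?thesis .
qed

lemma integrable_T_kernel:
  assumes "y \<in> R"
  shows "integrable H (\<lambda>y'. indicator {y'. \<zeta> y' < \<zeta> y} y' * (gV g y' \<bullet> w))"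
proof (rule integrable_dominated)
  show "(\<lambda>y'. indicator {y'. \<zeta> y' < \<zeta> y} y' * (gV g y' \<bullet> w)) \<in> borel_measurable H"
    by measurable
  show "integrable H (\<lambda>y'. K * (\<bar>g y'\<bar> * norm (mu y')) * norm w)"
    using integrable_g_mu by simp
  show "norm (indicator {y'. \<zeta> y' < \<zeta> y} y' * (gV g y' \<bullet> w)) \<le> K * (\<bar>g y'\<bar> * norm (mu y')) * norm w" for y'
    using assms gV_inner_le[of y' w] K_pos by (auto simp: indicator_def)
qed

lemma integral_R_pair_kernel:
  assumes "y \<in> R"
  shows "(\<integral>y'. indicator R y' * pair_kernel y y' \<partial>H) = g y * T y + Tadj y"
proof -
  define f1 where "f1 y' = g y * (indicator {y'. \<zeta> y' < \<zeta> y} y' * (gV g y' \<bullet> mu y))" for y'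
  define f2 where "f2 y' = indicator R y' * indicator {y'. \<zeta> y < \<zeta> y'} y' * (g y' * (gV g y \<bullet> mu y'))" for y'
  have "(\<integral>y'. indicator R y' * pair_kernel y y' \<partial>H) = (\<integral>y'. f1 y' + f2 y' \<partial>H)"
  proof (rule integral_cong_AE)
    show "AE y' in H. indicator R y' * pair_kernel y y' = f1 y' + f2 y'"
      using AE_zeta_neq[of "\<zeta> y"]
    proof eventually_elim
      case (elim y')
      then show ?case
        using assms by (cases "\<zeta> y' < \<zeta> y") (auto simp: pair_kernel_def f1_def f2_def indicator_def)
    qed
  qed (simp_all add: pair_kernel_def f1_def f2_def)
  also have "\<dots> = (\<integral>y'. f1 y' \<partial>H) + (\<integral>y'. f2 y' \<partial>H)"
    unfolding f1_def f2_def
    using integrable_T_kernel[OF assms] integrable_Tadj_kernel[OF assms] by simp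
  also have "\<dots> = g y * T y + Tadj y"
    unfolding f1_def f2_def Tadj_def using assms by (simp add: T_eq_integral)
  finally show ?thesis .
qed

lemma integrable_R_gV_inner: "integrable H (\<lambda>y. indicator R y * (gV g y \<bullet> w))"
  using integrable_inner_left[OF integrable_indicator_gV[of R], of w] by simp

lemma integral_R_gV_C:
  "(\<integral>y'. indicator R y' * (gV g y \<bullet> (C (ereal s) *v gV g y')) \<partial>H) = gV g y \<bullet> (C (ereal s) *v a_s)"
proof -
  have "(\<integral>y'. indicator R y' * (gV g y \<bullet> (C (ereal s) *v gV g y')) \<partial>H)
      = (\<integral>y'. indicator R y' * (gV g y' \<bullet> (C (ereal s) *v gV g y)) \<partial>H)"
    by (simp add: psd_matrix_inner_commute[OF psd_C, of "gV g y"])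
  also have "\<dots> = a_s \<bullet> (C (ereal s) *v gV g y)"
    by (simp add: Vint_inner)
  also have "\<dots> = gV g y \<bullet> (C (ereal s) *v a_s)"
    by (rule psd_matrix_inner_commute[OF psd_C])
  finally show ?thesis .
qed

lemma integrable_R_pair_kernel:
  assumes "y \<in> R"
  shows "integrable H (\<lambda>y'. indicator R y' * pair_kernel y y')"
proof (rule integrable_cong_AE_imp[OF Bochner_Integration.integrable_add[OF
      integrable_mult_right[OF integrable_T_kernel[OF assms]] integrable_Tadj_kernel[OF assms]]])
  show "AE y' in H. g y * (indicator {y'. \<zeta> y' < \<zeta> y} y' * (gV g y' \<bullet> mu y)) +
      indicator R y' * indicator {y'. \<zeta> y < \<zeta> y'} y' * (g y' * (gV g y \<bullet> mu y'))
      = indicator R y' * pair_kernel y y'"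
    using AE_zeta_neq[of "\<zeta> y"]
    by eventually_elim (use assms in \<open>auto simp: pair_kernel_def indicator_def\<close>)
qed (simp add: pair_kernel_def)

lemma integral_R_pair_moment_kernel:
  "(\<integral>y'. indicator R y * indicator R y' * (pair_kernel y y' - gV g y \<bullet> (C (ereal s) *v gV g y')) \<partial>H)
    = indicator R y * (g y * T y + Tadj y - gV g y \<bullet> (C (ereal s) *v a_s))"
proof (cases "y \<in> R")
  case True
  have "integrable H (\<lambda>y'. indicator R y' * (gV g y \<bullet> (C (ereal s) *v gV g y')))"
    using integrable_R_gV_inner[of "C (ereal s) *v gV g y"]
    by (simp add: psd_matrix_inner_commute[OF psd_C, of "gV g y"])
  then show ?thesis
    using True integrable_R_pair_kernel[OF True]
    by (simp add: right_diff_distrib integral_R_pair_kernel integral_R_gV_C)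
qed simp

lemma T_cross_integral:
  "(\<integral>x. (indicator R x * T x) * (indicator {y. \<zeta> y < \<zeta> x} y * (gV g y \<bullet> mu x)) \<partial>H)
   = indicator R y * (g y * T y + Tadj y - gV g y \<bullet> (C (ereal s) *v a_s))"
proof -
  define F where "F x y' = (indicator R x * indicator {y. \<zeta> y < \<zeta> x} y * (gV g y \<bullet> mu x)) *
      (indicator {y'. \<zeta> y' < \<zeta> x} y' * (gV g y' \<bullet> mu x))" for x y'
  have "(indicator R x * T x) * (indicator {y. \<zeta> y < \<zeta> x} y * (gV g y \<bullet> mu x)) = (\<integral>y'. F x y' \<partial>H)" for x
    by (cases "x \<in> R") (simp_all add: F_def T_eq_integral)
  moreover have "(\<integral>x. \<integral>y'. F x y' \<partial>H \<partial>H) = (\<integral>y'. \<integral>x. F x y' \<partial>H \<partial>H)"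
  proof (rule HH.Fubini_integral_product_bound)
    show "(\<lambda>(x, y'). F x y') \<in> borel_measurable (H \<Otimes>\<^sub>M H)"
      unfolding F_def indicator_def by measurable
    show "integrable H (\<lambda>x. K * (\<bar>g y\<bar> * norm (mu y)) * K * (norm (mu x))\<^sup>2)"
      using integrable_norm_mu_square by simp
    show "\<bar>F x y'\<bar> \<le> K * (\<bar>g y\<bar> * norm (mu y)) * K * (norm (mu x))\<^sup>2 * (\<bar>g y'\<bar> * norm (mu y'))" for x y'
    proof (cases "x \<in> R \<and> \<zeta> y < \<zeta> x \<and> \<zeta> y' < \<zeta> x")
      case True
      then have "\<zeta> y \<le> ereal s" "\<zeta> y' \<le> ereal s" by auto
      then have "\<bar>gV g y \<bullet> mu x\<bar> * \<bar>gV g y' \<bullet> mu x\<bar>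
          \<le> (K * (\<bar>g y\<bar> * norm (mu y)) * norm (mu x)) * (K * (\<bar>g y'\<bar> * norm (mu y')) * norm (mu x))"
        by (intro mult_mono gV_inner_le) (use K_pos in auto)
      then show ?thesis using True by (simp add: F_def abs_mult power2_eq_square mult_ac)
    qed (use K_pos in \<open>auto simp: F_def\<close>)
  qed (rule integrable_g_mu)
  moreover have "(\<integral>x. F x y' \<partial>H) = indicator R y * indicator R y' * (pair_kernel y y' - gV g y \<bullet> (C (ereal s) *v gV g y'))" for y'
    unfolding integral_pair_moment[symmetric] F_def
    by (rule Bochner_Integration.integral_cong) (auto simp: indicator_def)
  moreover note integral_R_pair_moment_kernel
  ultimately show ?thesis by simp
qed

lemma integral_R_T_square:
  "(\<integral>x. indicator R x * (T x)\<^sup>2 \<partial>H) = 2 * (\<integral>x. indicator R x * (g x * T x) \<partial>H) - a_s \<bullet> (C (ereal s) *v a_s)"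
proof -
  define F where "F x y = (indicator R x * T x) * (indicator {y. \<zeta> y < \<zeta> x} y * (gV g y \<bullet> mu x))" for x y
  have "indicator R x * (T x)\<^sup>2 = (\<integral>y. F x y \<partial>H)" for x
    by (cases "x \<in> R") (simp_all add: F_def T_eq_integral power2_eq_square)
  then have "(\<integral>x. indicator R x * (T x)\<^sup>2 \<partial>H) = (\<integral>x. \<integral>y. F x y \<partial>H \<partial>H)"
    by simp
  also have "\<dots> = (\<integral>y. \<integral>x. F x y \<partial>H \<partial>H)"
  proof (rule HH.Fubini_integral_product_bound)
    show "(\<lambda>(x, y). F x y) \<in> borel_measurable (H \<Otimes>\<^sub>M H)"
      unfolding F_def indicator_def by measurable
    show "integrable H (\<lambda>x. B * K * (norm (mu x))\<^sup>2)" using integrable_norm_mu_square by simp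
    show "\<bar>F x y\<bar> \<le> B * K * (norm (mu x))\<^sup>2 * (\<bar>g y\<bar> * norm (mu y))" for x y
    proof (cases "x \<in> R \<and> \<zeta> y < \<zeta> x")
      case True
      then have "\<zeta> y \<le> ereal s" by auto
      then have "\<bar>T x\<bar> * \<bar>gV g y \<bullet> mu x\<bar> \<le> (B * norm (mu x)) * (K * (\<bar>g y\<bar> * norm (mu y)) * norm (mu x))"
        by (intro mult_mono T_abs_le gV_inner_le) (use True B_nonneg in auto)
      then show ?thesis using True by (simp add: F_def abs_mult power2_eq_square mult_ac)
    qed (use K_pos B_nonneg in \<open>auto simp: F_def\<close>)
  qed (rule integrable_g_mu)
  also have "\<dots> = (\<integral>y. indicator R y * (g y * T y) + indicator R y * Tadj y
      - indicator R y * (gV g y \<bullet> (C (ereal s) *v a_s)) \<partial>H)"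
    unfolding F_def T_cross_integral by (simp add: algebra_simps)
  also have "\<dots> = (\<integral>y. indicator R y * (g y * T y) \<partial>H) + (\<integral>y. indicator R y * Tadj y \<partial>H)
      - (\<integral>y. indicator R y * (gV g y \<bullet> (C (ereal s) *v a_s)) \<partial>H)"
    using integrable_R_g_T integrable_R_Tadj integrable_R_gV_inner by simp
  also have "\<dots> = 2 * (\<integral>x. indicator R x * (g x * T x) \<partial>H) - a_s \<bullet> (C (ereal s) *v a_s)"
    by (simp add: integral_R_Tadj Vint_inner)
  finally show ?thesis .
qed

lemma integral_R_Kop_square:
  "(\<integral>x. indicator R x * (Kop H mu A g x)\<^sup>2 \<partial>H)
     = (\<integral>x. indicator R x * (g x)\<^sup>2 \<partial>H) - a_s \<bullet> (C (ereal s) *v a_s)"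
    and integrable_R_Kop_square: "integrable H (\<lambda>x. indicator R x * (Kop H mu A g x)\<^sup>2)"
proof -
  have "indicator R x * (Kop H mu A g x)\<^sup>2 =
      indicator R x * (g x)\<^sup>2 - 2 * (indicator R x * (g x * T x)) + indicator R x * (T x)\<^sup>2" for x
    by (simp add: Kop_def power2_diff algebra_simps)
  moreover have "integrable H (\<lambda>x. indicator R x * (g x)\<^sup>2)"
    using L2_integrable_indicator_mult[of R H g g] g_L2 by (simp add: power2_eq_square)
  ultimately show "integrable H (\<lambda>x. indicator R x * (Kop H mu A g x)\<^sup>2)"
    and "(\<integral>x. indicator R x * (Kop H mu A g x)\<^sup>2 \<partial>H)
      = (\<integral>x. indicator R x * (g x)\<^sup>2 \<partial>H) - a_s \<bullet> (C (ereal s) *v a_s)"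
    using integrable_R_g_T integrable_R_T_square by (simp_all add: integral_R_T_square)
qed

lemma integral_R_above_mu_component:
  "(\<integral>x. indicator R x * indicator {x. \<zeta> y < \<zeta> x} x * ((gV g y \<bullet> mu x) * mu x $ i) \<partial>H)
    = indicator R y * (g y * mu y $ i) - indicator R y * (gV g y \<bullet> (C (ereal s) *v axis i 1))"
proof -
  let ?e = "axis i 1 :: real^'q"
  have "{x. \<zeta> y < \<zeta> x \<and> \<zeta> x \<le> ereal s} \<in> sets H" by (simp add: Collect_conj_eq)
  then have "gV g y \<bullet> (moment_matrix {x. \<zeta> y < \<zeta> x \<and> \<zeta> x \<le> ereal s} *v ?e) =
      (\<integral>x. indicator {x. \<zeta> y < \<zeta> x \<and> \<zeta> x \<le> ereal s} x * ((gV g y \<bullet> mu x) * (?e \<bullet> mu x)) \<partial>H)"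
    by (rule moment_matrix_quadratic_form)
  also have "\<dots> = (\<integral>x. indicator R x * indicator {x. \<zeta> y < \<zeta> x} x * ((gV g y \<bullet> mu x) * mu x $ i) \<partial>H)"
    by (intro Bochner_Integration.integral_cong) (auto simp: indicator_def inner_axis inner_commute[of ?e])
  finally have "(\<integral>x. indicator R x * indicator {x. \<zeta> y < \<zeta> x} x * ((gV g y \<bullet> mu x) * mu x $ i) \<partial>H)
      = gV g y \<bullet> (moment_matrix {x. \<zeta> y < \<zeta> x \<and> \<zeta> x \<le> ereal s} *v ?e)" ..
  also have "\<dots> = indicator R y * (g y * mu y $ i) - indicator R y * (gV g y \<bullet> (C (ereal s) *v ?e))"
  proof (cases "y \<in> R")
    case True
    then have "\<zeta> y \<noteq> \<infinity>" by auto
    then show ?thesis using True gV_inner_C_zeta[of y ?e]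
      unfolding moment_matrix_zeta_interval
      by (simp add: matrix_vector_mult_diff_rdistrib inner_diff_right inner_axis inner_commute[of ?e])
  next
    case False
    then show ?thesis unfolding moment_matrix_zeta_interval by simp
  qed
  finally show ?thesis .
qed

lemma integral_R_T_mu:
  "(\<integral>x. indicator R x * (T x * mu x $ i) \<partial>H)
     = (\<integral>y. indicator R y * (g y * mu y $ i) \<partial>H) - a_s \<bullet> (C (ereal s) *v axis i 1)"
proof -
  let ?e = "axis i 1 :: real^'q"
  define F where "F x y = indicator R x * indicator {x. \<zeta> y < \<zeta> x} x * ((gV g y \<bullet> mu x) * mu x $ i)" for x y
  have "indicator R x * (T x * mu x $ i) = (\<integral>y. F x y \<partial>H)" for x
    by (cases "x \<in> R") (simp_all add: F_def T_eq_integral indicator_def mult_ac)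
  then have "(\<integral>x. indicator R x * (T x * mu x $ i) \<partial>H) = (\<integral>x. \<integral>y. F x y \<partial>H \<partial>H)"
    by simp
  also have "\<dots> = (\<integral>y. \<integral>x. F x y \<partial>H \<partial>H)"
  proof (rule HH.Fubini_integral_product_bound)
    show "(\<lambda>(x, y). F x y) \<in> borel_measurable (H \<Otimes>\<^sub>M H)"
      unfolding F_def indicator_def by measurable
    show "integrable H (\<lambda>x. K * (norm (mu x))\<^sup>2)" using integrable_norm_mu_square by simp
    show "\<bar>F x y\<bar> \<le> K * (norm (mu x))\<^sup>2 * (\<bar>g y\<bar> * norm (mu y))" for x y
    proof (cases "x \<in> R \<and> \<zeta> y < \<zeta> x")
      case True
      then have "\<zeta> y \<le> ereal s" by auto
      then have "\<bar>mu x $ i\<bar> * \<bar>gV g y \<bullet> mu x\<bar> \<le> norm (mu x) * (K * (\<bar>g y\<bar> * norm (mu y)) * norm (mu x))"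
        by (intro mult_mono component_le_norm_cart gV_inner_le) auto
      then show ?thesis using True by (simp add: F_def abs_mult power2_eq_square mult_ac)
    qed (use K_pos in \<open>auto simp: F_def\<close>)
  qed (rule integrable_g_mu)
  also have "\<dots> = (\<integral>y. indicator R y * (g y * mu y $ i) - indicator R y * (gV g y \<bullet> (C (ereal s) *v ?e)) \<partial>H)"
    unfolding F_def integral_R_above_mu_component ..
  also have "\<dots> = (\<integral>y. indicator R y * (g y * mu y $ i) \<partial>H) - a_s \<bullet> (C (ereal s) *v ?e)"
    using integrable_R_gV_inner L2_integrable_indicator_mult[OF _ g_L2 L2_mu_component, of R]
    by (simp add: Vint_inner)
  finally show ?thesis .
qed

lemma integral_R_Kop_mu: "(\<integral>x. indicator R x * (Kop H mu A g x * mu x $ i) \<partial>H) = (C (ereal s) *v a_s) $ i"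
proof -
  have "integrable H (\<lambda>x. indicator R x * (g x * mu x $ i))"
    using L2_integrable_indicator_mult[OF _ g_L2 L2_mu_component] by simp
  then have "(\<integral>x. indicator R x * (Kop H mu A g x * mu x $ i) \<partial>H)
      = (\<integral>x. indicator R x * (g x * mu x $ i) \<partial>H) - (\<integral>x. indicator R x * (T x * mu x $ i) \<partial>H)"
    using integrable_R_T_mu by (simp add: Kop_def algebra_simps)
  also have "\<dots> = a_s \<bullet> (C (ereal s) *v axis i 1)"
    by (simp add: integral_R_T_mu)
  also have "\<dots> = axis i 1 \<bullet> (C (ereal s) *v a_s)"
    by (rule psd_matrix_inner_commute[OF psd_C])
  also have "\<dots> = (C (ereal s) *v a_s) $ i"
    by (simp add: inner_commute[of "axis i 1"] inner_axis)
  finally show ?thesis .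
qed

end

section \<open>Removing the truncation\<close>

context scanning_setting
begin

lemma scanning_truncation_exists:
  assumes "L2 H g"
  obtains K where "scanning_truncation H mu A g s K"
proof -
  obtain K where "K > 0" "\<And>y. \<zeta> y \<le> ereal s \<Longrightarrow> norm (V y) \<le> K * norm (mu y)"
    using V_bounded_on_sublevel by blast
  then show ?thesis
    using assms by (intro that scanning_truncation.intro scanning_truncation_axioms.intro scanning_setting_axioms)
qed

lemma eventually_zeta_le:
  assumes "\<zeta> x \<noteq> \<infinity>"
  shows "eventually (\<lambda>n. \<zeta> x \<le> ereal (real n)) sequentially"
proof (cases "\<zeta> x")
  case (real r)
  obtain N :: nat where "r \<le> real N" using real_arch_simple by blast
  then show ?thesis using real
    by (intro eventually_sequentiallyI[of N]) (auto intro: order_trans)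
qed (use assms in auto)

lemma tendsto_integral_sublevel:
  fixes f :: "real^'p \<Rightarrow> real"
  assumes f: "integrable H f"
  shows "(\<lambda>n. \<integral>x. indicator {x. \<zeta> x \<le> ereal (real n)} x * f x \<partial>H) \<longlonglongrightarrow> (\<integral>x. f x \<partial>H)"
proof (rule integral_dominated_convergence[where w = "\<lambda>x. norm (f x)"])
  show "AE x in H. (\<lambda>n. indicator {x. \<zeta> x \<le> ereal (real n)} x * f x) \<longlonglongrightarrow> f x"
    using AE_zeta_neq[of \<infinity>]
  proof eventually_elim
    case (elim x)
    have "eventually (\<lambda>n. indicator {x. \<zeta> x \<le> ereal (real n)} x * f x = f x) sequentially"
      using eventually_zeta_le[OF elim] by eventually_elim simp
    then show ?case by (rule tendsto_eventually)
  qed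
qed (use f in \<open>auto simp: indicator_def\<close>)

lemma tendsto_integral_superlevel:
  fixes f :: "real^'p \<Rightarrow> real"
  assumes f: "integrable H f"
  shows "(\<lambda>n. \<integral>x. indicator {x. ereal (real n) < \<zeta> x} x * f x \<partial>H) \<longlonglongrightarrow> 0"
proof -
  have "indicator {x. ereal (real n) < \<zeta> x} x * f x = f x - indicator {x. \<zeta> x \<le> ereal (real n)} x * f x" for n x
    by (auto simp: indicator_def not_le)
  moreover have "integrable H (\<lambda>x. indicator {x. \<zeta> x \<le> ereal (real n)} x * f x)" for n
    using integrable_mult_indicator[OF _ f] by simp
  ultimately show ?thesis
    using tendsto_diff[OF tendsto_const tendsto_integral_sublevel[OF f], of "\<integral>x. f x \<partial>H"] f by simp
qed

lemma C_tendsto_0: "(\<lambda>n. C (ereal (real n)) $ i $ j) \<longlonglongrightarrow> 0"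
  using tendsto_integral_superlevel[OF L2_integrable_mult[OF L2_mu_component L2_mu_component, of i j]]
  by (simp add: C_eq_moment_matrix moment_matrix_def)

lemma sublevel_Kop_square:
  assumes g: "L2 H g"
  shows "integrable H (\<lambda>x. indicator {x. \<zeta> x \<le> ereal s} x * (Kop H mu A g x)\<^sup>2)"
    and "(\<integral>x. indicator {x. \<zeta> x \<le> ereal s} x * (Kop H mu A g x)\<^sup>2 \<partial>H)
      = (\<integral>x. indicator {x. \<zeta> x \<le> ereal s} x * (g x)\<^sup>2 \<partial>H)
        - Vint g {y. \<zeta> y \<le> ereal s} \<bullet> (C (ereal s) *v Vint g {y. \<zeta> y \<le> ereal s})"
proof -
  obtain K where "scanning_truncation H mu A g s K" using scanning_truncation_exists[OF g] .
  then interpret tr: scanning_truncation H mu A g s K .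
  show "integrable H (\<lambda>x. indicator {x. \<zeta> x \<le> ereal s} x * (Kop H mu A g x)\<^sup>2)"
    by (rule tr.integrable_R_Kop_square)
  show "(\<integral>x. indicator {x. \<zeta> x \<le> ereal s} x * (Kop H mu A g x)\<^sup>2 \<partial>H)
      = (\<integral>x. indicator {x. \<zeta> x \<le> ereal s} x * (g x)\<^sup>2 \<partial>H)
        - Vint g {y. \<zeta> y \<le> ereal s} \<bullet> (C (ereal s) *v Vint g {y. \<zeta> y \<le> ereal s})"
    by (rule tr.integral_R_Kop_square)
qed

lemma sublevel_Kop_mu:
  assumes g: "L2 H g"
  shows "(\<integral>x. indicator {x. \<zeta> x \<le> ereal s} x * (Kop H mu A g x * mu x $ i) \<partial>H)
    = (C (ereal s) *v Vint g {y. \<zeta> y \<le> ereal s}) $ i"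
proof -
  obtain K where "scanning_truncation H mu A g s K" using scanning_truncation_exists[OF g] .
  then interpret tr: scanning_truncation H mu A g s K .
  show ?thesis by (rule tr.integral_R_Kop_mu)
qed

lemma Vint_quadratic_form_le:
  fixes s :: real
  assumes g: "L2 H g"
  defines "a \<equiv> Vint g {y. \<zeta> y \<le> ereal s}"
  shows "a \<bullet> (C (ereal s) *v a) \<le> (\<integral>x. indicator {x. \<zeta> x \<le> ereal s} x * (g x)\<^sup>2 \<partial>H)"
proof -
  have "0 \<le> (\<integral>x. indicator {x. \<zeta> x \<le> ereal s} x * (Kop H mu A g x)\<^sup>2 \<partial>H)"
    by (rule integral_nonneg_AE) auto
  then show ?thesis unfolding sublevel_Kop_square(2)[OF g] a_def by simp
qed

lemma Vint_sublevel_split: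
  assumes g: "L2 H g" and "s0 \<le> s"
  shows "Vint g {y. \<zeta> y \<le> ereal s} = Vint g {y. \<zeta> y \<le> ereal s0}
    + Vint (\<lambda>y. indicator {y. ereal s0 < \<zeta> y} y * g y) {y. \<zeta> y \<le> ereal s}"
proof -
  let ?g' = "\<lambda>y. indicator {y. ereal s0 < \<zeta> y} y * g y"
  have g': "L2 H ?g'" by (rule L2_indicator_mult[OF _ g]) simp
  obtain K where "scanning_truncation H mu A g s K" using scanning_truncation_exists[OF g] .
  then interpret tr: scanning_truncation H mu A g s K .
  obtain K' where "scanning_truncation H mu A ?g' s K'" using scanning_truncation_exists[OF g'] .
  then interpret tr': scanning_truncation H mu A ?g' s K' .
  have "{y. \<zeta> y \<le> ereal s0} \<subseteq> {y. \<zeta> y \<le> ereal s}"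
    using assms(2) by (auto intro: order_trans)
  then have "integrable H (\<lambda>y. indicator {y. \<zeta> y \<le> ereal s0} y *\<^sub>R gV g y)"
    by (intro tr.integrable_indicator_gV) auto
  moreover have "indicator {y. \<zeta> y \<le> ereal s} y *\<^sub>R gV g y =
      indicator {y. \<zeta> y \<le> ereal s0} y *\<^sub>R gV g y + indicator {y. \<zeta> y \<le> ereal s} y *\<^sub>R gV ?g' y" for y
    using assms(2) by (auto simp: indicator_def gV_def intro: order_trans)
  ultimately show ?thesis
    unfolding Vint_def using tr'.integrable_indicator_gV[of "{y. \<zeta> y \<le> ereal s}"] by simp
qed

lemma Vint_quadratic_form_le_tail:
  fixes s s0 :: real
  assumes g: "L2 H g" and "s0 \<le> s"
  defines "a \<equiv> Vint g {y. \<zeta> y \<le> ereal s}" and "u \<equiv> Vint g {y. \<zeta> y \<le> ereal s0}"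
  shows "a \<bullet> (C (ereal s) *v a)
    \<le> 2 * (u \<bullet> (C (ereal s) *v u)) + 2 * (\<integral>x. indicator {x. ereal s0 < \<zeta> x} x * (g x)\<^sup>2 \<partial>H)"
proof -
  let ?g' = "\<lambda>y. indicator {y. ereal s0 < \<zeta> y} y * g y"
  define v where "v = Vint ?g' {y. \<zeta> y \<le> ereal s}"
  have g': "L2 H ?g'" by (rule L2_indicator_mult[OF _ g]) simp
  have "a \<bullet> (C (ereal s) *v a) \<le> 2 * (u \<bullet> (C (ereal s) *v u)) + 2 * (v \<bullet> (C (ereal s) *v v))"
    unfolding a_def u_def v_def Vint_sublevel_split[OF assms(1,2)]
    by (rule psd_matrix_quadratic_form_add_le[OF psd_C])
  also have "v \<bullet> (C (ereal s) *v v) \<le> (\<integral>x. indicator {x. \<zeta> x \<le> ereal s} x * (?g' x)\<^sup>2 \<partial>H)"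
    unfolding v_def by (rule Vint_quadratic_form_le[OF g'])
  also have "\<dots> \<le> (\<integral>x. indicator {x. ereal s0 < \<zeta> x} x * (g x)\<^sup>2 \<partial>H)"
  proof (rule integral_mono)
    show "integrable H (\<lambda>x. indicator {x. \<zeta> x \<le> ereal s} x * (?g' x)\<^sup>2)"
      using L2_integrable_indicator_mult[OF _ g' g', of "{x. \<zeta> x \<le> ereal s}"] by (simp add: power2_eq_square)
    show "integrable H (\<lambda>x. indicator {x. ereal s0 < \<zeta> x} x * (g x)\<^sup>2)"
      using L2_integrable_indicator_mult[OF _ g g, of "{x. ereal s0 < \<zeta> x}"] by (simp add: power2_eq_square)
  qed (simp add: indicator_def)
  finally show ?thesis by simp
qed

lemma Vint_quadratic_form_tendsto_0:
  assumes g: "L2 H g"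
  shows "(\<lambda>n. Vint g {y. \<zeta> y \<le> ereal (real n)} \<bullet> (C (ereal (real n)) *v Vint g {y. \<zeta> y \<le> ereal (real n)})) \<longlonglongrightarrow> 0"
proof (rule LIMSEQ_I)
  fix r :: real assume "0 < r"
  then have r4: "0 < r / 4" by simp
  have "integrable H (\<lambda>x. (g x)\<^sup>2)" using g unfolding L2_def by auto
  from LIMSEQ_D[OF tendsto_integral_superlevel[OF this] r4]
  obtain N0 where "\<forall>n\<ge>N0. norm ((\<integral>x. indicator {x. ereal (real n) < \<zeta> x} x * (g x)\<^sup>2 \<partial>H) - 0) < r / 4"
    by blast
  then have N0: "norm ((\<integral>x. indicator {x. ereal (real N0) < \<zeta> x} x * (g x)\<^sup>2 \<partial>H) - 0) < r / 4"
    by blast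
  define u where "u = Vint g {y. \<zeta> y \<le> ereal (real N0)}"
  from LIMSEQ_D[OF tendsto_quadratic_form[OF C_tendsto_0, of u] r4]
  obtain N1 where N1: "\<forall>n\<ge>N1. norm (u \<bullet> (C (ereal (real n)) *v u) - 0) < r / 4"
    by blast
  show "\<exists>N. \<forall>n\<ge>N. norm (Vint g {y. \<zeta> y \<le> ereal (real n)} \<bullet> (C (ereal (real n)) *v Vint g {y. \<zeta> y \<le> ereal (real n)}) - 0) < r"
  proof (intro exI allI impI)
    fix n assume n: "max N0 N1 \<le> n"
    define a where "a = Vint g {y. \<zeta> y \<le> ereal (real n)}"
    have "a \<bullet> (C (ereal (real n)) *v a) \<le> 2 * (u \<bullet> (C (ereal (real n)) *v u))
        + 2 * (\<integral>x. indicator {x. ereal (real N0) < \<zeta> x} x * (g x)\<^sup>2 \<partial>H)"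
      unfolding a_def u_def using n by (intro Vint_quadratic_form_le_tail[OF g]) simp
    moreover have "u \<bullet> (C (ereal (real n)) *v u) < r / 4" using N1[rule_format, of n] n abs_ge_self[of "u \<bullet> (C (ereal (real n)) *v u)"] by simp
    moreover have "(\<integral>x. indicator {x. ereal (real N0) < \<zeta> x} x * (g x)\<^sup>2 \<partial>H) < r / 4"
      using N0 by simp
    moreover have "0 \<le> a \<bullet> (C (ereal (real n)) *v a)" by (rule psd_matrix_nonneg[OF psd_C])
    ultimately show "norm (Vint g {y. \<zeta> y \<le> ereal (real n)} \<bullet> (C (ereal (real n)) *v Vint g {y. \<zeta> y \<le> ereal (real n)}) - 0) < r"
      unfolding a_def by simp
  qed
qed


lemma L2_Kop: "L2 H g \<Longrightarrow> L2 H (Kop H mu A g)"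
  and integral_Kop_square: "L2 H g \<Longrightarrow> (\<integral>x. (Kop H mu A g x)\<^sup>2 \<partial>H) = (\<integral>x. (g x)\<^sup>2 \<partial>H)"
proof -
  assume g: "L2 H g"
  define f where "f n x = indicator {x. \<zeta> x \<le> ereal (real n)} x * (Kop H mu A g x)\<^sup>2" for n x
  define Q where "Q n = Vint g {y. \<zeta> y \<le> ereal (real n)} \<bullet> (C (ereal (real n)) *v Vint g {y. \<zeta> y \<le> ereal (real n)})" for n
  have f_int: "integrable H (f n)"
    and f_integral: "(\<integral>x. f n x \<partial>H) = (\<integral>x. indicator {x. \<zeta> x \<le> ereal (real n)} x * (g x)\<^sup>2 \<partial>H) - Q n" for n
    unfolding f_def[abs_def] Q_def by (rule sublevel_Kop_square[OF g])+
  have "f m x \<le> f n x" if "m \<le> n" for m n x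
  proof -
    have "indicator {x. \<zeta> x \<le> ereal (real m)} x \<le> (indicator {x. \<zeta> x \<le> ereal (real n)} x :: real)"
      using that by (auto simp: indicator_def intro: order_trans)
    then show ?thesis unfolding f_def by (intro mult_right_mono) auto
  qed
  then have mono: "AE x in H. mono (\<lambda>n. f n x)"
    by (intro AE_I2 monoI)
  have lim: "AE x in H. (\<lambda>n. f n x) \<longlonglongrightarrow> (Kop H mu A g x)\<^sup>2"
    using AE_zeta_neq[of \<infinity>]
  proof eventually_elim
    case (elim x)
    have "eventually (\<lambda>n. f n x = (Kop H mu A g x)\<^sup>2) sequentially"
      using eventually_zeta_le[OF elim] by eventually_elim (simp add: f_def)
    then show ?case by (rule tendsto_eventually)
  qed
  have "integrable H (\<lambda>x. (g x)\<^sup>2)" using g unfolding L2_def by auto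
  then have ilim: "(\<lambda>n. \<integral>x. f n x \<partial>H) \<longlonglongrightarrow> (\<integral>x. (g x)\<^sup>2 \<partial>H) - 0"
    unfolding f_integral Q_def
    by (intro tendsto_diff tendsto_integral_sublevel Vint_quadratic_form_tendsto_0[OF g])
  have [measurable]: "Kop H mu A g \<in> borel_measurable H" using Kop_measurable[OF g] .
  have "(\<lambda>x. (Kop H mu A g x)\<^sup>2) \<in> borel_measurable H" by measurable
  note mc = integrable_monotone_convergence[OF f_int mono lim ilim this]
    integral_monotone_convergence[OF f_int mono lim ilim this]
  show "L2 H (Kop H mu A g)" using mc(1) unfolding L2_def by simp
  show "(\<integral>x. (Kop H mu A g x)\<^sup>2 \<partial>H) = (\<integral>x. (g x)\<^sup>2 \<partial>H)" using mc(2) by simp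
qed

lemma Kop_orthogonal:
  assumes g: "L2 H g"
  shows "(\<integral>x. Kop H mu A g x * mu x $ i \<partial>H) = 0"
proof -
  define a where "a n = Vint g {y. \<zeta> y \<le> ereal (real n)}" for n
  let ?M = "\<lambda>n. C (ereal (real n))"
  have "(\<lambda>n. (?M n *v a n) $ i) \<longlonglongrightarrow> (\<integral>x. Kop H mu A g x * mu x $ i \<partial>H)"
  proof -
    have eq: "(\<integral>x. indicator {x. \<zeta> x \<le> ereal (real n)} x * (Kop H mu A g x * mu x $ i) \<partial>H) = (?M n *v a n) $ i" for n
      unfolding a_def by (rule sublevel_Kop_mu[OF g])
    show ?thesis
      using tendsto_integral_sublevel[OF L2_integrable_mult[OF L2_Kop[OF g] L2_mu_component[of i]]] unfolding eq .
  qed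
  moreover have "(\<lambda>n. (?M n *v a n) $ i) \<longlonglongrightarrow> 0"
  proof (rule Lim_null_comparison)
    define c where "c = axis i 1 \<bullet> (C (-\<infinity>) *v axis i 1)"
    have "((?M n *v a n) $ i)\<^sup>2 \<le> c * (a n \<bullet> (?M n *v a n))" for n
    proof -
      have "((?M n *v a n) $ i)\<^sup>2 \<le> (axis i 1 \<bullet> (?M n *v axis i 1)) * (a n \<bullet> (?M n *v a n))"
        by (rule psd_matrix_component_square_le[OF psd_C])
      also have "\<dots> \<le> c * (a n \<bullet> (?M n *v a n))"
        unfolding c_def by (intro mult_right_mono C_antimono psd_matrix_nonneg[OF psd_C]) simp
      finally show ?thesis .
    qed
    then show "eventually (\<lambda>n. norm ((?M n *v a n) $ i) \<le> sqrt (c * (a n \<bullet> (?M n *v a n)))) sequentially"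
      by (intro always_eventually allI) (metis real_norm_def real_sqrt_abs real_sqrt_le_mono)
    have "(\<lambda>n. sqrt (c * (a n \<bullet> (?M n *v a n)))) \<longlonglongrightarrow> sqrt (c * 0)"
      unfolding a_def by (intro tendsto_real_sqrt tendsto_mult tendsto_const Vint_quadratic_form_tendsto_0[OF g])
    then show "(\<lambda>n. sqrt (c * (a n \<bullet> (?M n *v a n)))) \<longlonglongrightarrow> 0" by simp
  qed
  ultimately show ?thesis by (rule LIMSEQ_unique)
qed

lemma Vint_add:
  assumes g1: "L2 H g1" and g2: "L2 H g2" and S: "S \<in> sets H" "S \<subseteq> {y. \<zeta> y \<le> ereal s}"
  shows "Vint (\<lambda>x. g1 x + g2 x) S = Vint g1 S + Vint g2 S"
proof -
  obtain K1 where "scanning_truncation H mu A g1 s K1" using scanning_truncation_exists[OF g1] .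
  then interpret tr1: scanning_truncation H mu A g1 s K1 .
  obtain K2 where "scanning_truncation H mu A g2 s K2" using scanning_truncation_exists[OF g2] .
  then interpret tr2: scanning_truncation H mu A g2 s K2 .
  show ?thesis
    using tr1.integrable_indicator_gV[OF S] tr2.integrable_indicator_gV[OF S]
    by (simp add: Vint_def gV_def scaleR_add_left scaleR_add_right)
qed

lemma Kop_add_AE:
  assumes g1: "L2 H g1" and g2: "L2 H g2"
  shows "AE x in H. Kop H mu A (\<lambda>x. g1 x + g2 x) x = Kop H mu A g1 x + Kop H mu A g2 x"
  using AE_zeta_neq[of \<infinity>]
proof eventually_elim
  case (elim x)
  obtain n :: nat where "\<zeta> x \<le> ereal (real n)"
    using eventually_zeta_le[OF elim] unfolding eventually_sequentially by blast
  then have "Vint (\<lambda>x. g1 x + g2 x) {y. \<zeta> y < \<zeta> x} = Vint g1 {y. \<zeta> y < \<zeta> x} + Vint g2 {y. \<zeta> y < \<zeta> x}"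
    by (intro Vint_add[OF g1 g2, of _ "real n"]) auto
  then show ?case
    using L2_add[OF g1 g2] g1 g2 by (simp add: Kop_def Top_eq_Vint inner_add_left)
qed

lemma integral_Kop_mult:
  assumes g1: "L2 H g1" and g2: "L2 H g2"
  shows "(\<integral>x. Kop H mu A g1 x * Kop H mu A g2 x \<partial>H) = (\<integral>x. g1 x * g2 x \<partial>H)"
proof -
  let ?K = "Kop H mu A"
  have square_sum: "(\<integral>x. (f1 x + f2 x)\<^sup>2 \<partial>H) = (\<integral>x. (f1 x)\<^sup>2 \<partial>H) + 2 * (\<integral>x. f1 x * f2 x \<partial>H) + (\<integral>x. (f2 x)\<^sup>2 \<partial>H)"
    if "L2 H f1" "L2 H f2" for f1 f2
  proof -
    have "(\<integral>x. (f1 x + f2 x)\<^sup>2 \<partial>H) = (\<integral>x. (f1 x)\<^sup>2 + (f2 x)\<^sup>2 + 2 * (f1 x * f2 x) \<partial>H)"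
      by (simp add: power2_sum mult.assoc)
    then show ?thesis
      using that L2_integrable_mult[OF that] unfolding L2_def by simp
  qed
  have "(\<integral>x. (?K g1 x + ?K g2 x)\<^sup>2 \<partial>H) = (\<integral>x. (?K (\<lambda>x. g1 x + g2 x) x)\<^sup>2 \<partial>H)"
    using Kop_add_AE[OF g1 g2] by (intro integral_cong_AE) (auto simp: g1 g2 L2_add)
  also have "\<dots> = (\<integral>x. (g1 x + g2 x)\<^sup>2 \<partial>H)"
    by (rule integral_Kop_square[OF L2_add[OF g1 g2]])
  finally show ?thesis
    unfolding square_sum[OF L2_Kop[OF g1] L2_Kop[OF g2]] square_sum[OF g1 g2]
    by (simp add: integral_Kop_square[OF g1] integral_Kop_square[OF g2])
qed

lemma gperp_Kop:
  assumes g: "L2 H g"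
  shows "gperp H mu (Kop H mu A g) = Kop H mu A g"
proof -
  have "(\<integral>y. Kop H mu A g y *\<^sub>R mu y \<partial>H) $ i = 0" for i
  proof -
    have [measurable]: "Kop H mu A g \<in> borel_measurable H" using Kop_measurable[OF g] .
    have "integrable H (\<lambda>y. Kop H mu A g y *\<^sub>R mu y)"
      by (rule integrable_dominated[where u = "\<lambda>y. \<bar>Kop H mu A g y\<bar> * norm (mu y)"])
        (use L2_integrable_mult[OF L2_abs[OF L2_Kop[OF g]] L2_norm[OF L2_mu_component]] in simp_all)
    then have "(\<integral>y. Kop H mu A g y *\<^sub>R mu y \<partial>H) \<bullet> axis i 1 = (\<integral>y. (Kop H mu A g y *\<^sub>R mu y) \<bullet> axis i 1 \<partial>H)"
      by (rule integral_inner_left[symmetric])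
    also have "\<dots> = (\<integral>y. Kop H mu A g y * mu y $ i \<partial>H)"
      by (simp add: inner_axis)
    finally have "(\<integral>y. Kop H mu A g y *\<^sub>R mu y \<partial>H) \<bullet> axis i 1 = (\<integral>y. Kop H mu A g y * mu y $ i \<partial>H)" .
    then show ?thesis using Kop_orthogonal[OF g] by (simp add: inner_axis)
  qed
  then have "(\<integral>y. Kop H mu A g y *\<^sub>R mu y \<partial>H) = 0" by (simp add: vec_eq_iff)
  then show ?thesis by (simp add: gperp_def[abs_def])
qed

end

theorem proposition6p1:
  fixes H :: "(real^'p) measure"
    and mu :: "real^'p \<Rightarrow> real^'q"
    and A :: "real \<Rightarrow> (real^'p) set"
    and F :: "real measure"
    and M :: "'w measure"
    and b :: "(real^'p \<Rightarrow> real) \<Rightarrow> (real \<Rightarrow> real) \<Rightarrow> 'w \<Rightarrow> real"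
  assumes H_prob: "prob_space H" and H_borel: "sets H = sets borel"
    and mu_L2: "\<forall>i. L2 H (\<lambda>x. mu x $ i)"
    and Ctheta_pd: "pos_def_matrix (Ctheta H mu)"
    and scan: "scanning_family H A"
    and Cz_nonsing: "\<forall>z::real. invertible (Cz H mu A (ereal z))"
    and F_prob: "prob_space F" and F_borel: "sets F = sets borel"
    and M_prob: "prob_space M"
    and b_gauss: "centered_gaussian_process M {(g, f). L2 H g \<and> L2 F f} (\<lambda>(g, f). b g f)"
    and b_cov: "\<forall>g1 g2 f1 f2. L2 H g1 \<longrightarrow> L2 H g2 \<longrightarrow> L2 F f1 \<longrightarrow> L2 F f2 \<longrightarrow>
                  (\<integral>w. b g1 f1 w * b g2 f2 w \<partial>M) = (\<integral>x. g1 x * g2 x \<partial>H) * (\<integral>t. f1 t * f2 t \<partial>F)"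
    and b_lin1: "\<forall>g1 g2 f c1 c2. L2 H g1 \<longrightarrow> L2 H g2 \<longrightarrow> L2 F f \<longrightarrow>
                  (AE w in M. b (\<lambda>x. c1 * g1 x + c2 * g2 x) f w = c1 * b g1 f w + c2 * b g2 f w)"
    and b_lin2: "\<forall>g f1 f2 c1 c2. L2 H g \<longrightarrow> L2 F f1 \<longrightarrow> L2 F f2 \<longrightarrow>
                  (AE w in M. b g (\<lambda>t. c1 * f1 t + c2 * f2 t) w = c1 * b g f1 w + c2 * b g f2 w)"
  shows "(\<forall>g. L2 H g \<longrightarrow>
            L2 H (Kop H mu A g) \<and>
            (\<forall>i. (\<integral>x. Kop H mu A g x * mu x $ i \<partial>H) = 0) \<and>
            (\<integral>x. (Kop H mu A g x)\<^sup>2 \<partial>H) = (\<integral>x. (g x)\<^sup>2 \<partial>H))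
       \<and> (\<forall>f. L2 F f \<longrightarrow>
            (let w = (\<lambda>g. b (gperp H mu (Kop H mu A g)) f) in
              centered_gaussian_process M {g. L2 H g} w \<and>
              (\<forall>g1 g2. L2 H g1 \<longrightarrow> L2 H g2 \<longrightarrow>
                 (\<integral>v. w g1 v * w g2 v \<partial>M) = (\<integral>x. g1 x * g2 x \<partial>H) * (\<integral>t. (f t)\<^sup>2 \<partial>F))))"
proof -
  interpret scanning_setting H mu A
    using H_prob H_borel mu_L2 Ctheta_pd scan Cz_nonsing by (rule scanning_setting.intro)
  have "centered_gaussian_process M {g. L2 H g} (\<lambda>g. b (gperp H mu (Kop H mu A g)) f)" if f: "L2 F f" for f
    by (rule centered_gaussian_process_reindex[OF b_gauss, where h = "\<lambda>g. (Kop H mu A g, f)"])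
      (use f in \<open>auto simp: L2_Kop gperp_Kop\<close>)
  moreover have "(\<integral>v. b (gperp H mu (Kop H mu A g1)) f v * b (gperp H mu (Kop H mu A g2)) f v \<partial>M)
      = (\<integral>x. g1 x * g2 x \<partial>H) * (\<integral>t. (f t)\<^sup>2 \<partial>F)" if "L2 H g1" "L2 H g2" "L2 F f" for g1 g2 f
    using b_cov that by (simp add: gperp_Kop L2_Kop integral_Kop_mult power2_eq_square)
  ultimately show ?thesis
    using L2_Kop Kop_orthogonal integral_Kop_square by (simp add: Let_def)
qed

end
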